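(* If $1\le q<p<r\le\infty$ and $\tau\in[1,\infty)$, or if $1\le q\le p\le r\le\tau=\infty$, then $\mathcal{M}\dot B^{p,\tau}_{q,r}(\mathbb{R}^n)$ is a ball Banach function space.
   Context: Let $Q_{\nu,m}:=2^\nu(m+(0,1]^n)$, $\nu\in\mathbb{Z}$, $m\in\mathbb{Z}^n$. For $0<q\le p\le r\le\infty$ and $\tau\in(0,\infty]$, the Besov--Bourgain--Morrey space $\mathcal{M}\dot B^{p,\tau}_{q,r}(\mathbb{R}^n)$ is the set of $f\in L^q_{\mathrm{loc}}(\mathbb{R}^n)$ with $\|f\|:=\{\sum_{\nu\in\mathbb{Z}}[\sum_{m\in\mathbb{Z}^n}(|Q_{\nu,m}|^{1/p-1/q}\|f\|_{L^q(Q_{\nu,m})})^r]^{\tau/r}\}^{1/\tau}<\infty$ (usual modifications if an exponent is $\infty$). A ball Banach function space is a Banach space $X\subset$ measurable functions on $\mathbb{R}^n$ whose norm is defined for all measurable functions and satisfies: (a) $\|f\|_X=0\Rightarrow f=0$ a.e.; (b) $|g|\le|f|$ a.e. $\Rightarrow\|g\|_X\le\|f\|_X$; (c) $0\le f_m\uparrow f$ a.e. $\Rightarrow\|f_m\|_X\uparrow\|f\|_X$; (d) $\mathbf 1_B\in X$ for every ball $B$; (e) triangle inequality; (f) for each ball $B$ there is $C_{(B)}$ with $\int_B|f|\le C_{(B)}\|f\|_X$ for all $f\in X$. *)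

theory Defs
  imports "HOL-Analysis.Analysis"
begin

text \<open>Exponents in (0,\<infinity>] are modelled as extended nonnegative reals (ennreal), with
  top standing for \<infinity>.  All (quasi-)norms take values in [0,\<infinity>].\<close>

definition epow :: "ennreal \<Rightarrow> real \<Rightarrow> ennreal" where
  "epow a s = (if a = top then top else ennreal (enn2real a powr s))"

definition Lq_norm :: "ennreal \<Rightarrow> ('a::euclidean_space) set \<Rightarrow> ('a \<Rightarrow> real) \<Rightarrow> ennreal" where
  "Lq_norm q A f =
     (if q = top then Inf {c. AE x in lebesgue. x \<in> A \<longrightarrow> ennreal \<bar>f x\<bar> \<le> c}
      else epow (\<integral>\<^sup>+ x. ennreal (\<bar>f x\<bar> powr enn2real q) * indicator A x \<partial>lebesgue)
                (1 / enn2real q))"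

definition seq_norm :: "ennreal \<Rightarrow> ('i \<Rightarrow> ennreal) \<Rightarrow> ennreal" where
  "seq_norm r g =
     (if r = top then (SUP i. g i)
      else epow (\<integral>\<^sup>+ i. epow (g i) (enn2real r) \<partial>count_space UNIV) (1 / enn2real r))"

text \<open>Dyadic cubes Q_{\<nu>,m} = 2^\<nu>(m + (0,1]^n).\<close>
definition dyadic_cube :: "int \<Rightarrow> int ^ 'n \<Rightarrow> (real ^ 'n) set" where
  "dyadic_cube \<nu> m = {x. \<forall>i. 2 powr real_of_int \<nu> * real_of_int (m $ i) < x $ i
                          \<and> x $ i \<le> 2 powr real_of_int \<nu> * (real_of_int (m $ i) + 1)}"

definition BBM_norm :: "ennreal \<Rightarrow> ennreal \<Rightarrow> ennreal \<Rightarrow> ennreal \<Rightarrow> (real ^ 'n \<Rightarrow> real) \<Rightarrow> ennreal" where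
  "BBM_norm p \<tau> q r f =
     seq_norm \<tau> (\<lambda>\<nu>::int. seq_norm r (\<lambda>m::int ^ 'n.
        ennreal (measure lebesgue (dyadic_cube \<nu> m) powr (enn2real (1 / p) - enn2real (1 / q)))
        * Lq_norm q (dyadic_cube \<nu> m) f))"

definition Lq_loc :: "ennreal \<Rightarrow> ('a::euclidean_space \<Rightarrow> real) \<Rightarrow> bool" where
  "Lq_loc q f \<longleftrightarrow> f \<in> borel_measurable lebesgue \<and> (\<forall>K. compact K \<longrightarrow> Lq_norm q K f < top)"

text \<open>The space \<M>\<dot>B^{p,\<tau>}_{q,r}(R^n), parameters in the order p \<tau> q r.\<close>
definition BBM_space :: "ennreal \<Rightarrow> ennreal \<Rightarrow> ennreal \<Rightarrow> ennreal \<Rightarrow> (real ^ 'n \<Rightarrow> real) set" where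
  "BBM_space p \<tau> q r = {f. Lq_loc q f \<and> BBM_norm p \<tau> q r f < top}"

text \<open>Ball Banach function space: X is a set of Lebesgue measurable functions, N a
  [0,\<infinity>]-valued functional defined on all measurable functions, X = {f. N f < \<infinity>},
  N is a norm on X (modulo a.e. equality, by (a)), X is complete, and (a)--(f) hold.\<close>
definition ball_Banach_function_space ::
  "('a::euclidean_space \<Rightarrow> real) set \<Rightarrow> (('a \<Rightarrow> real) \<Rightarrow> ennreal) \<Rightarrow> bool" where
  "ball_Banach_function_space X N \<longleftrightarrow>
     X \<subseteq> borel_measurable lebesgue
   \<and> (\<forall>f \<in> borel_measurable lebesgue. f \<in> X \<longleftrightarrow> N f < top)
   \<comment> \<open>norm: absolute homogeneity\<close>
   \<and> (\<forall>f \<in> X. \<forall>c::real. N (\<lambda>x. c * f x) = ennreal \<bar>c\<bar> * N f)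
   \<comment> \<open>(a)\<close>
   \<and> (\<forall>f \<in> borel_measurable lebesgue. N f = 0 \<longrightarrow> (AE x in lebesgue. f x = 0))
   \<comment> \<open>(b)\<close>
   \<and> (\<forall>f \<in> borel_measurable lebesgue. \<forall>g \<in> borel_measurable lebesgue.
        (AE x in lebesgue. \<bar>g x\<bar> \<le> \<bar>f x\<bar>) \<longrightarrow> N g \<le> N f)
   \<comment> \<open>(c) Fatou property\<close>
   \<and> (\<forall>F f. (\<forall>k. F k \<in> borel_measurable lebesgue) \<longrightarrow> f \<in> borel_measurable lebesgue \<longrightarrow>
        (\<forall>k. AE x in lebesgue. 0 \<le> F k x \<and> F k x \<le> F (Suc k) x) \<longrightarrow>
        (AE x in lebesgue. (\<lambda>k. F k x) \<longlonglongrightarrow> f x) \<longrightarrow>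
        incseq (\<lambda>k. N (F k)) \<and> (\<lambda>k. N (F k)) \<longlonglongrightarrow> N f)
   \<comment> \<open>(d)\<close>
   \<and> (\<forall>c r. indicator (ball c r) \<in> X)
   \<comment> \<open>(e) triangle inequality\<close>
   \<and> (\<forall>f \<in> X. \<forall>g \<in> X. N (\<lambda>x. f x + g x) \<le> N f + N g)
   \<comment> \<open>(f)\<close>
   \<and> (\<forall>c r. \<exists>C::real. \<forall>f \<in> X.
        (\<integral>\<^sup>+ x. ennreal \<bar>f x\<bar> * indicator (ball c r) x \<partial>lebesgue) \<le> ennreal C * N f)
   \<comment> \<open>completeness (Banach space)\<close>
   \<and> (\<forall>F. (\<forall>k. F k \<in> X) \<longrightarrow>
        (\<forall>e>0. \<exists>K. \<forall>k\<ge>K. \<forall>l\<ge>K. N (\<lambda>x. F k x - F l x) < e) \<longrightarrow>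
        (\<exists>f \<in> X. (\<lambda>k. N (\<lambda>x. F k x - f x)) \<longlonglongrightarrow> 0))"

end

(*
  Write the norm of f as an iterated L^s-norm of |f|: L^q on each dyadic cube, weighted
  l^r over the cubes of one level, l^tau over the levels.  Homogeneity, the triangle
  inequality, monotonicity and the Fatou property are then inherited from the L^s-norms
  (Minkowski's inequality being proved by convexity).  Every unit cube Q_{0,m} contributes
  ||f||_{L^q(Q_{0,m})} <= ||f||, which gives local integrability and, through a fast Cauchy
  subsequence as in the Riesz-Fischer theorem, completeness.  For the indicator of a set of
  finite measure mu the level-nu term is at most both |Q_nu|^(1/p-1/r) mu^(1/r) and
  |Q_nu|^(1/p-1/q) mu^(1/q): for q <= p <= r this is bounded, enough when tau is infinite,
  and for q < p < r it decays geometrically in |nu|, hence is tau-summable.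
*)
theory Submission
  imports Defs
begin

lemma epow_top [simp]: "epow top s = top"
  by (simp add: epow_def)

lemma epow_ennreal: "0 \<le> x \<Longrightarrow> epow (ennreal x) s = ennreal (x powr s)"
  by (simp add: epow_def)

lemma epow_zero [simp]: "s > 0 \<Longrightarrow> epow 0 s = 0"
  by (simp add: epow_def)

lemma epow_one [simp]: "epow 1 s = 1"
  by (simp add: epow_def)

lemma epow_mono:
  assumes "a \<le> b" "s \<ge> 0"
  shows "epow a s \<le> epow b s"
proof (cases "b = top")
  case False
  then have "a \<noteq> top"
    using assms top_unique by auto
  with False assms show ?thesis
    by (auto simp: epow_def top.not_eq_extremum intro!: ennreal_leI powr_mono2 enn2real_mono)
qed simp

lemma epow_epow_inverse: "s > 0 \<Longrightarrow> epow (epow a s) (1 / s) = a"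
  by (cases a rule: ennreal_cases) (auto simp: epow_def powr_powr)

lemma epow_eq_0_iff: "s > 0 \<Longrightarrow> epow a s = 0 \<longleftrightarrow> a = 0"
  by (cases a rule: ennreal_cases) (auto simp: epow_def)

lemma epow_eq_top_iff: "epow a s = top \<longleftrightarrow> a = top"
  by (cases a rule: ennreal_cases) (auto simp: epow_def)

lemma epow_mult:
  assumes "s > 0"
  shows "epow (a * b) s = epow a s * epow b s"
proof (cases "a = top \<or> b = top")
  case True
  with assms show ?thesis
    by (auto simp: ennreal_mult_top ennreal_top_mult epow_eq_0_iff)
next
  case False
  then obtain x y where "a = ennreal x" "b = ennreal y" "x \<ge> 0" "y \<ge> 0"
    by (metis ennreal_cases)
  then show ?thesis
    by (simp add: epow_ennreal powr_mult flip: ennreal_mult)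
qed

lemma epow_SUP:
  assumes "s > 0"
  shows "epow (SUP i\<in>I. f i) s = (SUP i\<in>I. epow (f i) s)"
proof (rule antisym)
  let ?S = "SUP i\<in>I. epow (f i) s"
  have "(SUP i\<in>I. f i) \<le> epow ?S (1 / s)"
  proof (rule SUP_least)
    fix i assume "i \<in> I"
    then have "epow (epow (f i) s) (1 / s) \<le> epow ?S (1 / s)"
      using assms by (intro epow_mono SUP_upper) auto
    then show "f i \<le> epow ?S (1 / s)"
      using epow_epow_inverse[OF assms] by simp
  qed
  then have "epow (SUP i\<in>I. f i) s \<le> epow (epow ?S (1 / s)) s"
    using assms by (intro epow_mono) auto
  also have "\<dots> = ?S"
    using epow_epow_inverse[of "1 / s" ?S] assms by simp
  finally show "epow (SUP i\<in>I. f i) s \<le> ?S" .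
  show "?S \<le> epow (SUP i\<in>I. f i) s"
    using assms by (intro SUP_least epow_mono SUP_upper) auto
qed

lemma epow_measurable [measurable]:
  assumes [measurable]: "g \<in> borel_measurable M"
  shows "(\<lambda>x. epow (g x) s) \<in> borel_measurable M"
  unfolding epow_def by measurable

lemma enn2real_ge_1: "1 \<le> s \<Longrightarrow> s \<noteq> top \<Longrightarrow> 1 \<le> enn2real s"
  by (cases s rule: ennreal_cases) (auto simp: ennreal_le_iff2)

lemma enn2real_inverse:
  "1 \<le> x \<Longrightarrow> enn2real (1 / x) = (if x = top then 0 else 1 / enn2real x)"
  by (cases x rule: ennreal_cases) (auto simp: ennreal_le_iff2 simp flip: divide_ennreal)

lemma enn2real_inverse_antimono:
  fixes a b :: ennreal
  assumes "1 \<le> a" "a \<le> b"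
  shows "enn2real (1 / b) \<le> enn2real (1 / a)"
  using assms enn2real_ge_1[of a] enn2real_ge_1[of b] enn2real_mono[of a b]
  by (auto simp: enn2real_inverse top_unique top.not_eq_extremum intro!: frac_le)

lemma enn2real_inverse_strict_antimono:
  fixes a b :: ennreal
  assumes "1 \<le> a" "a < b"
  shows "enn2real (1 / b) < enn2real (1 / a)"
proof -
  have "a \<noteq> top"
    using assms by auto
  then have "1 \<le> enn2real a"
    using assms enn2real_ge_1[of a] by auto
  moreover have "b \<noteq> top \<Longrightarrow> enn2real a < enn2real b"
    using assms \<open>a \<noteq> top\<close>
    by (cases a rule: ennreal_cases; cases b rule: ennreal_cases) (auto simp: ennreal_less_iff)
  ultimately show ?thesis
    using assms by (auto simp: enn2real_inverse frac_less2)
qed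

text \<open>Unlike \<open>esssup\<close> of HOL-Probability, this needs no measurability of \<open>g\<close>; it is
  the form in which \<^const>\<open>Lq_norm\<close> defines the \<open>L\<^sup>\<infinity>\<close>-norm.\<close>
definition ess_sup :: "'a measure \<Rightarrow> ('a \<Rightarrow> ennreal) \<Rightarrow> ennreal" where
  "ess_sup M g = Inf {c. AE x in M. g x \<le> c}"

lemma ess_sup_le: "(AE x in M. g x \<le> c) \<Longrightarrow> ess_sup M g \<le> c"
  unfolding ess_sup_def by (rule Inf_lower) simp

lemma AE_le_ess_sup: "AE x in M. g x \<le> ess_sup M g"
proof -
  have "top \<in> {c. AE x in M. g x \<le> c}"
    by simp
  then obtain u where u: "\<And>n. AE x in M. g x \<le> u n" "u \<longlonglongrightarrow> ess_sup M g"
    using Inf_as_limit[of "{c. AE x in M. g x \<le> c}"] unfolding ess_sup_def by blast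
  have "AE x in M. \<forall>n::nat. g x \<le> u n"
    using u(1) by (simp add: AE_all_countable)
  then show ?thesis
    by (rule eventually_mono) (use u(2) LIMSEQ_le_const in blast)
qed

lemma ess_sup_mono: "(AE x in M. g x \<le> h x) \<Longrightarrow> ess_sup M g \<le> ess_sup M h"
  using AE_le_ess_sup[of h M]
  by (intro ess_sup_le) (auto elim: eventually_mono[OF eventually_conj] intro: order_trans)

lemma ess_sup_cmult_le: "ess_sup M (\<lambda>x. c * g x) \<le> c * ess_sup M g"
  using AE_le_ess_sup[of g M] by (intro ess_sup_le) (auto elim!: eventually_mono intro: mult_left_mono)

lemma ess_sup_cmult:
  assumes "c < top"
  shows "ess_sup M (\<lambda>x. c * g x) = c * ess_sup M g"
proof (cases "c = 0")
  case False
  then have cancel: "(1 / c) * (c * y) = y" for y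
    using assms by (metis ennreal_divide_self ennreal_times_divide mult.commute mult.right_neutral
        not_less_zero not_gr_zero)
  have "c * ess_sup M g = c * ess_sup M (\<lambda>x. (1 / c) * (c * g x))"
    by (simp add: cancel)
  also have "\<dots> \<le> c * ((1 / c) * ess_sup M (\<lambda>x. c * g x))"
    by (intro mult_left_mono ess_sup_cmult_le) simp
  also have "\<dots> = ess_sup M (\<lambda>x. c * g x)"
    using cancel[of "ess_sup M (\<lambda>x. c * g x)"] by (simp only: ac_simps)
  finally show ?thesis
    using ess_sup_cmult_le[of M c g] by (rule antisym[rotated])
qed (use ess_sup_cmult_le[of M 0 g] in simp)

lemma ess_sup_add: "ess_sup M (\<lambda>x. g x + h x) \<le> ess_sup M g + ess_sup M h"
  using AE_le_ess_sup[of g M] AE_le_ess_sup[of h M]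
  by (intro ess_sup_le) (auto elim!: eventually_mono[OF eventually_conj] intro: add_mono)

lemma ess_sup_SUP: "ess_sup M (\<lambda>x. SUP k. g k x) = (SUP k::nat. ess_sup M (g k))"
proof (rule antisym)
  have "AE x in M. \<forall>k. g k x \<le> ess_sup M (g k)"
    using AE_le_ess_sup[of "g _" M] by (simp add: AE_all_countable)
  then show "ess_sup M (\<lambda>x. SUP k. g k x) \<le> (SUP k::nat. ess_sup M (g k))"
    by (intro ess_sup_le) (auto elim!: eventually_mono intro!: SUP_mono)
  show "(SUP k::nat. ess_sup M (g k)) \<le> ess_sup M (\<lambda>x. SUP k. g k x)"
    by (intro SUP_least ess_sup_mono AE_I2) (auto intro: SUP_upper)
qed

lemma ess_sup_eq_0_imp_AE: "ess_sup M g = 0 \<Longrightarrow> AE x in M. g x = 0"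
  using AE_le_ess_sup[of g M] by (auto elim!: eventually_mono)

lemma ess_sup_zero: "ess_sup M (\<lambda>x. 0) = 0"
  using ess_sup_le[of "\<lambda>x. 0" 0 M] by simp

lemma ess_sup_count_space: "ess_sup (count_space UNIV) g = (SUP i. g i)"
  unfolding ess_sup_def AE_count_space
  by (rule antisym) (auto intro!: Inf_lower SUP_upper Inf_greatest SUP_least)

text \<open>Convexity of \<open>x powr s\<close> applied to \<open>(u + v)/(a + b) = a/(a + b) * (u/a) + b/(a + b) * (v/b)\<close>;
  integrated with \<open>a, b\<close> the norms of two functions, it gives Minkowski's inequality.\<close>
lemma powr_add_le_weighted_pos:
  fixes a b u v s :: real
  assumes s: "s \<ge> 1" and a: "a > 0" and b: "b > 0" and u: "u > 0" and v: "v > 0"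
  shows "(u + v) powr s \<le> (a + b) powr (s - 1) * (a powr (1 - s) * u powr s + b powr (1 - s) * v powr s)"
proof -
  define t where "t = b / (a + b)"
  have ab: "a + b > 0" using a b by simp
  have t: "t \<ge> 0" "t \<le> 1" "1 - t = a / (a + b)"
    using a b by (auto simp: t_def field_simps)
  have "(1 - t) * (u / a) + t * (v / b) = (u + v) / (a + b)"
    unfolding t(3) using a b by (simp add: t_def add_divide_distrib)
  moreover have "((1 - t) * (u / a) + t * (v / b)) powr s \<le> (1 - t) * (u / a) powr s + t * (v / b) powr s"
    using convex_onD[OF powr_convex[OF s] t(1,2), of "u / a" "v / b"] a b u v by simp
  ultimately have "(u + v) powr s / (a + b) powr s
      \<le> (1 - t) * (u powr s / a powr s) + t * (v powr s / b powr s)"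
    using a b u v by (simp add: powr_divide)
  then have "(u + v) powr s / (a + b) powr s
      \<le> a / (a + b) * (u powr s / a powr s) + b / (a + b) * (v powr s / b powr s)"
    by (simp only: t(3)) (simp add: t_def)
  then have "(u + v) powr s
      \<le> (a + b) powr s * (a / (a + b) * (u powr s / a powr s) + b / (a + b) * (v powr s / b powr s))"
    using ab by (simp add: divide_le_eq mult.commute)
  also have "\<dots> = (a + b) powr s / (a + b) * (a / a powr s * u powr s + b / b powr s * v powr s)"
  proof -
    have "A \<noteq> 0 \<Longrightarrow> B \<noteq> 0 \<Longrightarrow> S \<noteq> 0 \<Longrightarrow>
        C * (a / S * (U / A) + b / S * (V / B)) = C / S * (a / A * U + b / B * V)" for A B S C U V :: real
      by (simp add: field_simps)
    then show ?thesis using a b by simp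
  qed
  also have "\<dots> = (a + b) powr (s - 1) * (a powr (1 - s) * u powr s + b powr (1 - s) * v powr s)"
    using a b ab by (simp add: powr_diff)
  finally show ?thesis .
qed

lemma powr_add_le_weighted:
  fixes a b u v s :: real
  assumes s: "s \<ge> 1" and a: "a > 0" and b: "b > 0" and u: "u \<ge> 0" and v: "v \<ge> 0"
  shows "(u + v) powr s \<le> (a + b) powr (s - 1) * (a powr (1 - s) * u powr s + b powr (1 - s) * v powr s)"
proof -
  have single: "w powr s \<le> (x + y) powr (s - 1) * (y powr (1 - s) * w powr s)"
    if "x > 0" "y > 0" for x y w :: real
  proof -
    have "y powr (s - 1) * (y powr (1 - s) * w powr s) \<le> (x + y) powr (s - 1) * (y powr (1 - s) * w powr s)"
      using that s by (intro mult_right_mono powr_mono2) auto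
    moreover have "y powr (s - 1) * (y powr (1 - s) * w powr s) = w powr s"
      using that by (simp add: mult.assoc[symmetric] powr_add[symmetric])
    ultimately show ?thesis
      by simp
  qed
  consider "u = 0" | "v = 0" | "u > 0" "v > 0"
    using u v by linarith
  then show ?thesis
  proof cases
    case 1
    then show ?thesis
      using single[OF a b, of v] s by simp
  next
    case 2
    then show ?thesis
      using single[OF b a, of u] s by (simp add: add.commute)
  qed (rule powr_add_le_weighted_pos[OF s a b])
qed

lemma epow_add_le_weighted:
  assumes "s \<ge> 1" "a > 0" "b > 0"
  shows "epow (u + v) s \<le> ennreal ((a + b) powr (s - 1))
           * (ennreal (a powr (1 - s)) * epow u s + ennreal (b powr (1 - s)) * epow v s)"
proof (cases "u = top \<or> v = top")
  case True
  with assms show ?thesis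
    by (auto simp: ennreal_mult_top)
next
  case False
  then obtain x y where "u = ennreal x" "v = ennreal y" "x \<ge> 0" "y \<ge> 0"
    by (metis ennreal_cases)
  with powr_add_le_weighted[OF assms \<open>x \<ge> 0\<close> \<open>y \<ge> 0\<close>] assms show ?thesis
    by (simp add: epow_ennreal flip: ennreal_plus ennreal_mult)
qed

definition nn_Lp_norm :: "'a measure \<Rightarrow> real \<Rightarrow> ('a \<Rightarrow> ennreal) \<Rightarrow> ennreal" where
  "nn_Lp_norm M s g = epow (\<integral>\<^sup>+x. epow (g x) s \<partial>M) (1 / s)"

lemma nn_Lp_norm_mono:
  "(AE x in M. g x \<le> h x) \<Longrightarrow> s > 0 \<Longrightarrow> nn_Lp_norm M s g \<le> nn_Lp_norm M s h"
  unfolding nn_Lp_norm_def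
  by (intro epow_mono nn_integral_mono_AE) (auto elim!: eventually_mono intro: epow_mono)

lemma nn_Lp_norm_cong_AE:
  "(AE x in M. g x = h x) \<Longrightarrow> s > 0 \<Longrightarrow> nn_Lp_norm M s g = nn_Lp_norm M s h"
  by (intro antisym nn_Lp_norm_mono) (auto elim: eventually_mono)

lemma nn_Lp_norm_zero: "s > 0 \<Longrightarrow> nn_Lp_norm M s (\<lambda>x. 0) = 0"
  by (simp add: nn_Lp_norm_def)

lemma nn_integral_epow_eq:
  assumes "nn_Lp_norm M s g = ennreal a" "a \<ge> 0" "s > 0"
  shows "(\<integral>\<^sup>+x. epow (g x) s \<partial>M) = ennreal (a powr s)"
  using epow_epow_inverse[of "1 / s" "\<integral>\<^sup>+x. epow (g x) s \<partial>M"] assms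
  by (simp add: nn_Lp_norm_def epow_ennreal)

lemma nn_Lp_norm_eq_0_imp_AE:
  assumes [measurable]: "g \<in> borel_measurable M" and "s > 0" "nn_Lp_norm M s g = 0"
  shows "AE x in M. g x = 0"
proof -
  have "(\<integral>\<^sup>+x. epow (g x) s \<partial>M) = 0"
    using nn_integral_epow_eq[of M s g 0] assms by simp
  then have "AE x in M. epow (g x) s = 0"
    by (subst (asm) nn_integral_0_iff_AE) auto
  then show ?thesis
    using assms by (auto elim!: eventually_mono simp: epow_eq_0_iff)
qed

lemma nn_Lp_norm_cmult:
  assumes [measurable]: "g \<in> borel_measurable M" and "c < top" "s > 0"
  shows "nn_Lp_norm M s (\<lambda>x. c * g x) = c * nn_Lp_norm M s g"
proof -
  have "(\<integral>\<^sup>+x. epow (c * g x) s \<partial>M) = epow c s * (\<integral>\<^sup>+x. epow (g x) s \<partial>M)"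
    using assms by (simp add: epow_mult nn_integral_cmult)
  with assms show ?thesis
    unfolding nn_Lp_norm_def by (simp add: epow_mult epow_epow_inverse)
qed

lemma nn_Lp_norm_SUP:
  assumes "\<And>k x. g k x \<le> g (Suc k) x" and [measurable]: "\<And>k. g k \<in> borel_measurable M"
    and "s > 0"
  shows "nn_Lp_norm M s (\<lambda>x. SUP k. g k x) = (SUP k::nat. nn_Lp_norm M s (g k))"
proof -
  have "incseq (\<lambda>k x. epow (g k x) s)"
    using assms by (intro incseq_SucI le_funI epow_mono) auto
  then have "(\<integral>\<^sup>+x. (SUP k. epow (g k x) s) \<partial>M) = (SUP k. \<integral>\<^sup>+x. epow (g k x) s \<partial>M)"
    by (intro nn_integral_monotone_convergence_SUP) measurable
  with assms show ?thesis
    unfolding nn_Lp_norm_def by (simp add: epow_SUP)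
qed

lemma nn_Lp_norm_count_space_ge:
  assumes "s > 0"
  shows "g i \<le> nn_Lp_norm (count_space UNIV) s g"
proof -
  have "epow (g i) s = (\<integral>\<^sup>+x. epow (g x) s * indicator {i} x \<partial>count_space UNIV)"
    by (subst nn_integral_indicator_finite) auto
  also have "\<dots> \<le> (\<integral>\<^sup>+x. epow (g x) s \<partial>count_space UNIV)"
    by (intro nn_integral_mono) (auto split: split_indicator)
  finally have "epow (epow (g i) s) (1 / s) \<le> nn_Lp_norm (count_space UNIV) s g"
    unfolding nn_Lp_norm_def using assms by (intro epow_mono) auto
  with assms show ?thesis
    by (simp add: epow_epow_inverse)
qed

lemma nn_Lp_norm_add:
  assumes s: "s \<ge> 1" and [measurable]: "g \<in> borel_measurable M" "h \<in> borel_measurable M"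
  shows "nn_Lp_norm M s (\<lambda>x. g x + h x) \<le> nn_Lp_norm M s g + nn_Lp_norm M s h"
proof -
  have s0: "s > 0"
    using s by simp
  consider "nn_Lp_norm M s g = top \<or> nn_Lp_norm M s h = top"
    | "nn_Lp_norm M s g = 0" | "nn_Lp_norm M s h = 0"
    | a b where "nn_Lp_norm M s g = ennreal a" "a > 0" "nn_Lp_norm M s h = ennreal b" "b > 0"
    by (metis ennreal_cases ennreal_eq_0_iff not_le)
  then show ?thesis
  proof cases
    case 2
    then have "AE x in M. g x + h x = h x"
      using nn_Lp_norm_eq_0_imp_AE[of g M, OF _ s0] by (auto elim!: eventually_mono)
    from nn_Lp_norm_cong_AE[OF this s0] show ?thesis
      by simp
  next
    case 3
    then have "AE x in M. g x + h x = g x"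
      using nn_Lp_norm_eq_0_imp_AE[of h M, OF _ s0] by (auto elim!: eventually_mono)
    from nn_Lp_norm_cong_AE[OF this s0] show ?thesis
      by simp
  next
    case 4
    let ?K = "(a + b) powr (s - 1)" and ?\<alpha> = "a powr (1 - s)" and ?\<beta> = "b powr (1 - s)"
    have "(\<integral>\<^sup>+x. epow (g x + h x) s \<partial>M)
        \<le> (\<integral>\<^sup>+x. ennreal ?K * (ennreal ?\<alpha> * epow (g x) s + ennreal ?\<beta> * epow (h x) s) \<partial>M)"
      using 4 s by (intro nn_integral_mono epow_add_le_weighted) auto
    also have "\<dots> = ennreal ?K * (ennreal ?\<alpha> * ennreal (a powr s) + ennreal ?\<beta> * ennreal (b powr s))"
      using 4 s0 nn_integral_epow_eq[of M s g a] nn_integral_epow_eq[of M s h b]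
      by (simp add: nn_integral_cmult nn_integral_add)
    also have "\<dots> = ennreal (?K * (?\<alpha> * a powr s + ?\<beta> * b powr s))"
      by (simp add: ennreal_mult)
    also have "?K * (?\<alpha> * a powr s + ?\<beta> * b powr s) = (a + b) powr s"
      using 4 powr_mult_base[of "a + b" "s - 1"] by (simp add: powr_add[symmetric] mult.commute)
    finally have "nn_Lp_norm M s (\<lambda>x. g x + h x) \<le> epow (ennreal ((a + b) powr s)) (1 / s)"
      unfolding nn_Lp_norm_def by (rule epow_mono) (use s0 in simp)
    also have "\<dots> = nn_Lp_norm M s g + nn_Lp_norm M s h"
      using 4 s0 by (simp add: epow_ennreal powr_powr)
    finally show ?thesis .
  qed auto
qed

definition nn_Lnorm :: "'a measure \<Rightarrow> ennreal \<Rightarrow> ('a \<Rightarrow> ennreal) \<Rightarrow> ennreal" where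
  "nn_Lnorm M s g = (if s = top then ess_sup M g else nn_Lp_norm M (enn2real s) g)"

lemma seq_norm_eq_nn_Lnorm: "seq_norm r g = nn_Lnorm (count_space UNIV) r g"
  unfolding seq_norm_def nn_Lnorm_def nn_Lp_norm_def by (simp add: ess_sup_count_space)

lemma Lq_norm_eq_nn_Lnorm:
  assumes "1 \<le> q"
  shows "Lq_norm q A f = nn_Lnorm lebesgue q (\<lambda>x. ennreal \<bar>f x\<bar> * indicator A x)"
proof (cases "q = top")
  case True
  have "(x \<in> A \<longrightarrow> ennreal \<bar>f x\<bar> \<le> c) \<longleftrightarrow> ennreal \<bar>f x\<bar> * indicator A x \<le> c" for x c
    by (auto split: split_indicator)
  with True show ?thesis
    unfolding Lq_norm_def nn_Lnorm_def ess_sup_def by simp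
next
  case False
  then have "enn2real q > 0"
    using enn2real_ge_1[OF assms] by simp
  then have "ennreal (\<bar>f x\<bar> powr enn2real q) * indicator A x
      = epow (ennreal \<bar>f x\<bar> * indicator A x) (enn2real q)" for x
    by (auto simp: epow_ennreal split: split_indicator)
  with False show ?thesis
    unfolding Lq_norm_def nn_Lnorm_def nn_Lp_norm_def by simp
qed

context
  fixes s :: ennreal
  assumes s: "1 \<le> s"
begin

lemma enn2real_exponent_pos: "s \<noteq> top \<Longrightarrow> 0 < enn2real s"
  using enn2real_ge_1[OF s] by simp

lemma nn_Lnorm_mono: "(AE x in M. g x \<le> h x) \<Longrightarrow> nn_Lnorm M s g \<le> nn_Lnorm M s h"
  unfolding nn_Lnorm_def using enn2real_exponent_pos enn2real_ge_1[OF s]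
  by (auto intro: ess_sup_mono nn_Lp_norm_mono)

lemma nn_Lnorm_zero: "nn_Lnorm M s (\<lambda>x. 0) = 0"
  unfolding nn_Lnorm_def using enn2real_exponent_pos enn2real_ge_1[OF s]
  by (simp add: ess_sup_zero nn_Lp_norm_zero)

lemma nn_Lnorm_eq_0_imp_AE:
  "g \<in> borel_measurable M \<Longrightarrow> nn_Lnorm M s g = 0 \<Longrightarrow> AE x in M. g x = 0"
  unfolding nn_Lnorm_def using enn2real_exponent_pos enn2real_ge_1[OF s]
  by (auto split: if_splits intro: ess_sup_eq_0_imp_AE nn_Lp_norm_eq_0_imp_AE[of g M "enn2real s"])

lemma nn_Lnorm_cmult:
  "g \<in> borel_measurable M \<Longrightarrow> c < top \<Longrightarrow> nn_Lnorm M s (\<lambda>x. c * g x) = c * nn_Lnorm M s g"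
  unfolding nn_Lnorm_def using enn2real_exponent_pos enn2real_ge_1[OF s]
  by (simp add: ess_sup_cmult nn_Lp_norm_cmult)

lemma nn_Lnorm_add:
  "g \<in> borel_measurable M \<Longrightarrow> h \<in> borel_measurable M \<Longrightarrow>
    nn_Lnorm M s (\<lambda>x. g x + h x) \<le> nn_Lnorm M s g + nn_Lnorm M s h"
  unfolding nn_Lnorm_def using enn2real_exponent_pos enn2real_ge_1[OF s]
  by (simp add: ess_sup_add nn_Lp_norm_add)

lemma nn_Lnorm_SUP:
  "(\<And>k x. g k x \<le> g (Suc k) x) \<Longrightarrow> (\<And>k. g k \<in> borel_measurable M) \<Longrightarrow>
    nn_Lnorm M s (\<lambda>x. SUP k. g k x) = (SUP k::nat. nn_Lnorm M s (g k))"
  unfolding nn_Lnorm_def using enn2real_exponent_pos enn2real_ge_1[OF s]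
  by (simp add: ess_sup_SUP nn_Lp_norm_SUP)

lemma nn_Lnorm_count_space_ge: "g i \<le> nn_Lnorm (count_space UNIV) s g"
  unfolding nn_Lnorm_def using enn2real_exponent_pos enn2real_ge_1[OF s]
  by (simp add: ess_sup_count_space SUP_upper nn_Lp_norm_count_space_ge)

lemma nn_Lnorm_sum:
  assumes "finite I" "\<And>i. i \<in> I \<Longrightarrow> g i \<in> borel_measurable M"
  shows "nn_Lnorm M s (\<lambda>x. \<Sum>i\<in>I. g i x) \<le> (\<Sum>i\<in>I. nn_Lnorm M s (g i))"
  using assms
proof (induction I rule: finite_induct)
  case (insert i I)
  then have "nn_Lnorm M s (\<lambda>x. g i x + (\<Sum>j\<in>I. g j x)) \<le> nn_Lnorm M s (g i) + nn_Lnorm M s (\<lambda>x. \<Sum>j\<in>I. g j x)"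
    by (intro nn_Lnorm_add) auto
  with insert show ?case
    by (simp add: add_left_mono order_trans)
qed (simp add: nn_Lnorm_zero)

end

lemma le_add_powr_weighted:
  fixes a y s :: real
  assumes "a > 0" "y \<ge> 0" "s \<ge> 1"
  shows "y \<le> a + a powr (1 - s) * y powr s"
proof (cases "y \<le> a")
  case True
  then show ?thesis
    by (simp add: add_increasing2)
next
  case False
  have "y = a powr (1 - s) * (y * a powr (s - 1))"
    using assms by (simp add: mult.left_commute powr_add[symmetric])
  also have "\<dots> \<le> a powr (1 - s) * (y * y powr (s - 1))"
    using assms False by (intro mult_left_mono powr_mono2) auto
  also have "y * y powr (s - 1) = y powr s"
    using False assms powr_mult_base[of y "s - 1"] by simp
  finally show ?thesis
    using assms by simp
qed

text \<open>A crude form of Hoelder's inequality on a set of measure one, obtained by integrating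
  \<open>y \<le> a + a powr (1 - s) * y powr s\<close> with \<open>a\<close> the \<open>L\<^sup>s\<close>-norm.\<close>
lemma nn_integral_le_2_nn_Lp_norm:
  assumes s: "1 \<le> s" and [measurable]: "Q \<in> sets M" "g \<in> borel_measurable M" and "emeasure M Q = 1"
  shows "(\<integral>\<^sup>+x. g x * indicator Q x \<partial>M) \<le> 2 * nn_Lp_norm M s (\<lambda>x. g x * indicator Q x)"
proof -
  define G where "G x = g x * indicator Q x" for x
  have [measurable]: "G \<in> borel_measurable M"
    unfolding G_def by measurable
  consider "nn_Lp_norm M s G = top" | "nn_Lp_norm M s G = 0" | a where "nn_Lp_norm M s G = ennreal a" "a > 0"
    by (metis ennreal_cases ennreal_eq_0_iff not_le)
  then have "(\<integral>\<^sup>+x. G x \<partial>M) \<le> 2 * nn_Lp_norm M s G"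
  proof cases
    case 2
    then have "AE x in M. G x = 0"
      using s by (intro nn_Lp_norm_eq_0_imp_AE) auto
    then show ?thesis
      by (simp add: nn_integral_0_iff_AE[THEN iffD2])
  next
    case 3
    have "G x \<le> ennreal a * indicator Q x + ennreal (a powr (1 - s)) * epow (G x) s" for x
    proof (cases "G x")
      case (real y)
      then have "x \<in> Q \<Longrightarrow> G x \<le> ennreal (a + a powr (1 - s) * y powr s)"
        using le_add_powr_weighted[of a y s] 3 s by (simp add: ennreal_leI del: ennreal_plus)
      with real 3 show ?thesis
        by (auto simp: G_def epow_ennreal ennreal_mult split: split_indicator)
    qed (use 3 in \<open>simp add: ennreal_mult_top\<close>)
    then have "(\<integral>\<^sup>+x. G x \<partial>M)
        \<le> (\<integral>\<^sup>+x. ennreal a * indicator Q x + ennreal (a powr (1 - s)) * epow (G x) s \<partial>M)"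
      by (intro nn_integral_mono)
    also have "\<dots> = ennreal a + ennreal (a powr (1 - s)) * ennreal (a powr s)"
      using assms 3 nn_integral_epow_eq[OF 3(1)] by (simp add: nn_integral_add nn_integral_cmult)
    also have "\<dots> = 2 * nn_Lp_norm M s G"
      using 3 by (simp add: powr_add[symmetric] mult_2 flip: ennreal_mult)
    finally show ?thesis .
  qed simp
  then show ?thesis
    unfolding G_def .
qed

lemma nn_integral_le_ess_sup:
  assumes [measurable]: "Q \<in> sets M" and "emeasure M Q = 1"
  shows "(\<integral>\<^sup>+x. g x * indicator Q x \<partial>M) \<le> ess_sup M (\<lambda>x. g x * indicator Q x)"
proof -
  have "AE x in M. g x * indicator Q x \<le> ess_sup M (\<lambda>x. g x * indicator Q x) * indicator Q x"
    using AE_le_ess_sup[of "\<lambda>x. g x * indicator Q x" M] by (auto elim!: eventually_mono split: split_indicator)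
  then have "(\<integral>\<^sup>+x. g x * indicator Q x \<partial>M)
      \<le> (\<integral>\<^sup>+x. ess_sup M (\<lambda>x. g x * indicator Q x) * indicator Q x \<partial>M)"
    by (rule nn_integral_mono_AE)
  with assms show ?thesis
    by (simp add: nn_integral_cmult_indicator)
qed

lemma nn_integral_le_2_nn_Lnorm:
  assumes "1 \<le> q" "Q \<in> sets M" "g \<in> borel_measurable M" "emeasure M Q = 1"
  shows "(\<integral>\<^sup>+x. g x * indicator Q x \<partial>M) \<le> 2 * nn_Lnorm M q (\<lambda>x. g x * indicator Q x)"
proof (cases "q = top")
  case True
  then have "(\<integral>\<^sup>+x. g x * indicator Q x \<partial>M) \<le> nn_Lnorm M q (\<lambda>x. g x * indicator Q x)"
    using nn_integral_le_ess_sup[OF assms(2,4)] by (simp add: nn_Lnorm_def)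
  also have "\<dots> \<le> 2 * nn_Lnorm M q (\<lambda>x. g x * indicator Q x)"
    unfolding mult_2 by (rule add_increasing) auto
  finally show ?thesis .
next
  case False
  then show ?thesis
    using nn_integral_le_2_nn_Lp_norm[OF enn2real_ge_1[OF assms(1) False] assms(2-4)]
    by (simp add: nn_Lnorm_def)
qed

lemma convergent_if_summable_abs_diff:
  fixes a :: "nat \<Rightarrow> real"
  assumes "summable (\<lambda>j. \<bar>a (Suc j) - a j\<bar>)"
  shows "convergent a"
proof -
  have "(\<lambda>n. \<Sum>j<n. a (Suc j) - a j) \<longlonglongrightarrow> (\<Sum>j. a (Suc j) - a j)"
    using summable_LIMSEQ[OF summable_rabs_cancel[OF assms]] .
  then have "(\<lambda>n. a 0 + (\<Sum>j<n. a (Suc j) - a j)) \<longlonglongrightarrow> a 0 + (\<Sum>j. a (Suc j) - a j)"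
    by (intro tendsto_add) auto
  then show ?thesis
    by (auto simp: sum_lessThan_telescope convergent_def)
qed

lemma abs_diff_lim_le_suminf:
  fixes a :: "nat \<Rightarrow> real"
  assumes "summable (\<lambda>j. \<bar>a (Suc j) - a j\<bar>)"
  shows "\<bar>a j - lim a\<bar> \<le> (\<Sum>i. \<bar>a (Suc (i + j)) - a (i + j)\<bar>)"
proof -
  have "(\<lambda>i. a (i + j)) \<longlonglongrightarrow> lim a"
    using convergent_if_summable_abs_diff[OF assms] LIMSEQ_ignore_initial_segment
    by (auto simp: convergent_LIMSEQ_iff)
  then have "(\<lambda>i. a (Suc (i + j)) - a (i + j)) sums (lim a - a j)"
    using telescope_sums[of "\<lambda>i. a (i + j)"] by simp
  moreover have "summable (\<lambda>i. \<bar>a (Suc (i + j)) - a (i + j)\<bar>)"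
    using summable_ignore_initial_segment[OF assms, of j] by simp
  ultimately show ?thesis
    by (metis abs_minus_commute sums_unique summable_rabs)
qed

lemma fast_Cauchy_subseq:
  fixes d :: "nat \<Rightarrow> nat \<Rightarrow> ennreal"
  assumes "\<forall>e>0. \<exists>K. \<forall>k\<ge>K. \<forall>l\<ge>K. d k l < e"
  obtains \<phi> where "\<And>j. \<phi> j \<le> \<phi> (Suc j)"
    and "\<And>j k l. \<phi> j \<le> k \<Longrightarrow> \<phi> j \<le> l \<Longrightarrow> d k l < ennreal ((1 / 2) ^ j)"
proof -
  have "\<forall>j. \<exists>K. \<forall>k\<ge>K. \<forall>l\<ge>K. d k l < ennreal ((1 / 2) ^ j)"
    using assms by simp
  then obtain K where K: "\<And>j k l. K j \<le> k \<Longrightarrow> K j \<le> l \<Longrightarrow> d k l < ennreal ((1 / 2) ^ j)"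
    by metis
  define \<phi> where "\<phi> j = (\<Sum>i\<le>j. K i)" for j
  have "K j \<le> \<phi> j" for j
    unfolding \<phi>_def by (rule member_le_sum) auto
  moreover have "\<phi> j \<le> \<phi> (Suc j)" for j
    unfolding \<phi>_def by simp
  ultimately show ?thesis
    using that K by (meson order_trans)
qed

lemma suminf_ennreal_half_power: "(\<Sum>i. ennreal ((1 / 2) ^ (i + j))) = ennreal (2 * (1 / 2) ^ j)"
proof -
  have "(\<lambda>i. (1 / 2 :: real) ^ j * (1 / 2) ^ i) sums ((1 / 2) ^ j * 2)"
    using sums_mult[OF geometric_sums, of "1 / 2 :: real" "(1 / 2) ^ j"] by simp
  then show ?thesis
    by (simp add: power_add mult.commute sums_ennreal sums_unique[symmetric])
qed

lemma LIMSEQ_zero_if_le_geometric: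
  fixes x :: "nat \<Rightarrow> ennreal"
  assumes "\<And>j k. \<phi> j \<le> k \<Longrightarrow> x k \<le> ennreal (c * (1 / 2) ^ j)"
  shows "x \<longlonglongrightarrow> 0"
proof (rule order_tendstoI)
  fix a :: ennreal
  assume "0 < a"
  have "(\<lambda>j. ennreal (c * (1 / 2) ^ j)) \<longlonglongrightarrow> ennreal (c * 0)"
    by (intro tendsto_ennrealI tendsto_mult_left LIMSEQ_realpow_zero) auto
  then have "\<forall>\<^sub>F j in sequentially. ennreal (c * (1 / 2) ^ j) < a"
    using \<open>0 < a\<close> by (intro order_tendstoD(2)) auto
  then obtain j where "ennreal (c * (1 / 2) ^ j) < a"
    by (auto simp: eventually_sequentially)
  then show "\<forall>\<^sub>F k in sequentially. x k < a"
    using assms[of j] by (auto simp: eventually_sequentially intro: le_less_trans)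
qed simp

lemma dyadic_cube_borel [measurable]: "dyadic_cube \<nu> m \<in> sets borel"
proof -
  have "dyadic_cube \<nu> m = (\<Inter>i. {x. x $ i \<in> {2 powr real_of_int \<nu> * real_of_int (m $ i) <..
      2 powr real_of_int \<nu> * (real_of_int (m $ i) + 1)}})"
    unfolding dyadic_cube_def by auto
  then show ?thesis
    by (auto intro!: sets.countable_INT')
qed

lemma dyadic_cube_lebesgue [measurable]: "dyadic_cube \<nu> m \<in> sets lebesgue"
  using dyadic_cube_borel by simp

definition cube_index :: "int \<Rightarrow> real ^ 'n \<Rightarrow> int ^ 'n" where
  "cube_index \<nu> x = (\<chi> i. \<lceil>x $ i / 2 powr real_of_int \<nu>\<rceil> - 1)"

lemma dyadic_cube_iff_cube_index: "x \<in> dyadic_cube \<nu> m \<longleftrightarrow> m = cube_index \<nu> x"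
proof -
  have "c * real_of_int k < t \<and> t \<le> c * (real_of_int k + 1) \<longleftrightarrow> k = \<lceil>t / c\<rceil> - 1"
    if "c > 0" for c t and k :: int
  proof -
    have "c * real_of_int k < t \<and> t \<le> c * (real_of_int k + 1)
        \<longleftrightarrow> real_of_int (k + 1) - 1 < t / c \<and> t / c \<le> real_of_int (k + 1)"
      using that by (simp add: field_simps)
    also have "\<dots> \<longleftrightarrow> k = \<lceil>t / c\<rceil> - 1"
      using ceiling_eq_iff[of "t / c" "k + 1"] by auto
    finally show ?thesis .
  qed
  then show ?thesis
    unfolding dyadic_cube_def cube_index_def by (simp add: vec_eq_iff)
qed

lemma mem_dyadic_cube_index: "x \<in> dyadic_cube \<nu> (cube_index \<nu> x)"
  by (simp add: dyadic_cube_iff_cube_index)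

lemma UN_dyadic_cube: "(\<Union>m. dyadic_cube \<nu> m) = UNIV"
  using mem_dyadic_cube_index by blast

lemma emeasure_dyadic_cube:
  "emeasure lebesgue (dyadic_cube \<nu> (m :: int ^ 'n)) = ennreal (2 powr (real_of_int \<nu> * CARD('n)))"
proof -
  define l u :: "real ^ 'n"
    where "l = (\<chi> i. 2 powr real_of_int \<nu> * real_of_int (m $ i))"
      and "u = (\<chi> i. 2 powr real_of_int \<nu> * (real_of_int (m $ i) + 1))"
  have sub: "box l u \<subseteq> dyadic_cube \<nu> m" "dyadic_cube \<nu> m \<subseteq> cbox l u"
    unfolding dyadic_cube_def l_def u_def by (auto simp: mem_box_cart less_imp_le)
  have lu: "\<And>b. b \<in> Basis \<Longrightarrow> l \<bullet> b \<le> u \<bullet> b"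
    unfolding l_def u_def by (auto simp: Basis_vec_def inner_axis)
  have "(\<Prod>b\<in>Basis. (u - l) \<bullet> b) = (\<Prod>b\<in>(Basis :: (real ^ 'n) set). 2 powr real_of_int \<nu>)"
    unfolding l_def u_def by (intro prod.cong) (auto simp: Basis_vec_def inner_axis algebra_simps)
  also have "\<dots> = 2 powr (real_of_int \<nu> * CARD('n))"
    by (simp add: powr_realpow[symmetric] powr_powr)
  finally have vol: "(\<Prod>b\<in>Basis. (u - l) \<bullet> b) = 2 powr (real_of_int \<nu> * CARD('n))" .
  have "emeasure lebesgue (box l u) \<le> emeasure lebesgue (dyadic_cube \<nu> m)"
    by (intro emeasure_mono sub) measurable
  moreover have "emeasure lebesgue (dyadic_cube \<nu> m) \<le> emeasure lebesgue (cbox l u)"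
    by (intro emeasure_mono sub) simp
  ultimately show ?thesis
    using emeasure_lborel_box[OF lu] emeasure_lborel_cbox[OF lu] vol by (simp add: emeasure_completion)
qed

lemma measure_dyadic_cube:
  "measure lebesgue (dyadic_cube \<nu> (m :: int ^ 'n)) = 2 powr (real_of_int \<nu> * CARD('n))"
  unfolding measure_def emeasure_dyadic_cube by simp

lemma finite_vec_componentwise:
  fixes B :: "'n::finite \<Rightarrow> 'a set"
  assumes "\<And>i. finite (B i)"
  shows "finite {v::'a ^ 'n. \<forall>i. v $ i \<in> B i}"
proof -
  have "vec_nth ` {v::'a ^ 'n. \<forall>i. v $ i \<in> B i} \<subseteq> Pi\<^sub>E UNIV B"
    by auto
  then have "finite (vec_nth ` {v::'a ^ 'n. \<forall>i. v $ i \<in> B i})"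
    using finite_PiE[of UNIV B] assms by (auto intro: finite_subset)
  then show ?thesis
    by (rule finite_imageD) (auto intro: inj_onI simp: vec_eq_iff)
qed

lemma bounded_subset_finite_unit_cubes:
  fixes K :: "(real ^ 'n) set"
  assumes "bounded K"
  obtains S where "finite S" "K \<subseteq> (\<Union>m\<in>S. dyadic_cube 0 m)"
proof -
  obtain a where a: "\<And>x. x \<in> K \<Longrightarrow> norm x \<le> a"
    using assms bounded_iff by blast
  define N where "N = \<lceil>a\<rceil>"
  define S where "S = {v::int ^ 'n. \<forall>i. v $ i \<in> {-N-1..N}}"
  have "cube_index 0 x \<in> S" if "x \<in> K" for x
  proof -
    have "\<lceil>x $ i\<rceil> - 1 \<in> {-N-1..N}" for i
    proof -
      have "- a \<le> x $ i" "x $ i \<le> a"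
        using a[OF that] component_le_norm_cart[of x i] by auto
      then have "\<lceil>- a\<rceil> \<le> \<lceil>x $ i\<rceil>" "\<lceil>x $ i\<rceil> \<le> N"
        unfolding N_def by (auto intro: ceiling_mono)
      moreover have "- N \<le> \<lceil>- a\<rceil>"
        unfolding N_def ceiling_minus using floor_le_ceiling by simp
      ultimately show ?thesis
        by simp
    qed
    then show ?thesis
      by (simp add: S_def cube_index_def)
  qed
  then have "K \<subseteq> (\<Union>m\<in>S. dyadic_cube 0 m)"
    using mem_dyadic_cube_index by blast
  moreover have "finite S"
    unfolding S_def by (rule finite_vec_componentwise) simp
  ultimately show ?thesis
    using that by blast
qed

lemma indicator_le_sum_dyadic_cubes:
  assumes "finite S" "K \<subseteq> (\<Union>m\<in>S. dyadic_cube \<nu> m)"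
  shows "g x * indicator K x \<le> (\<Sum>m\<in>S. g x * indicator (dyadic_cube \<nu> m) x :: ennreal)"
proof (cases "x \<in> K")
  case True
  then have "cube_index \<nu> x \<in> S"
    using assms by (auto simp: dyadic_cube_iff_cube_index)
  with assms(1) have "g x * indicator (dyadic_cube \<nu> (cube_index \<nu> x)) x
      \<le> (\<Sum>m\<in>S. g x * indicator (dyadic_cube \<nu> m) x)"
    by (intro member_le_sum) auto
  with True show ?thesis
    by (simp add: mem_dyadic_cube_index)
qed simp

definition cube_weight :: "ennreal \<Rightarrow> ennreal \<Rightarrow> int \<Rightarrow> int ^ 'n \<Rightarrow> ennreal" where
  "cube_weight p q \<nu> m =
     ennreal (measure lebesgue (dyadic_cube \<nu> m) powr (enn2real (1 / p) - enn2real (1 / q)))"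

definition level_norm ::
  "ennreal \<Rightarrow> ennreal \<Rightarrow> ennreal \<Rightarrow> (real ^ 'n \<Rightarrow> ennreal) \<Rightarrow> int \<Rightarrow> ennreal" where
  "level_norm p q r g \<nu> = nn_Lnorm (count_space UNIV) r (\<lambda>m::int ^ 'n.
     cube_weight p q \<nu> m * nn_Lnorm lebesgue q (\<lambda>x. g x * indicator (dyadic_cube \<nu> m) x))"

definition BBM_nn_norm ::
  "ennreal \<Rightarrow> ennreal \<Rightarrow> ennreal \<Rightarrow> ennreal \<Rightarrow> (real ^ 'n \<Rightarrow> ennreal) \<Rightarrow> ennreal" where
  "BBM_nn_norm p \<tau> q r g = nn_Lnorm (count_space UNIV) \<tau> (level_norm p q r g)"

lemma BBM_norm_eq_BBM_nn_norm:
  "1 \<le> q \<Longrightarrow> BBM_norm p \<tau> q r f = BBM_nn_norm p \<tau> q r (\<lambda>x. ennreal \<bar>f x\<bar>)"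
  unfolding BBM_norm_def BBM_nn_norm_def level_norm_def cube_weight_def seq_norm_eq_nn_Lnorm
    Lq_norm_eq_nn_Lnorm by (rule refl)

lemma cube_weight_level_0 [simp]: "cube_weight p q 0 m = 1"
  unfolding cube_weight_def measure_dyadic_cube by simp

context
  fixes p \<tau> q r :: ennreal
  assumes q: "1 \<le> q" and r: "1 \<le> r" and \<tau>: "1 \<le> \<tau>"
begin

lemma BBM_nn_norm_mono:
  assumes "AE x in lebesgue. g x \<le> h x"
  shows "BBM_nn_norm p \<tau> q r g \<le> BBM_nn_norm p \<tau> q r h"
proof -
  have "nn_Lnorm lebesgue q (\<lambda>x. g x * indicator (dyadic_cube \<nu> m) x)
      \<le> nn_Lnorm lebesgue q (\<lambda>x. h x * indicator (dyadic_cube \<nu> m) x)" for \<nu> m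
    using assms by (intro nn_Lnorm_mono[OF q]) (auto elim!: eventually_mono intro: mult_right_mono)
  then have "level_norm p q r g \<nu> \<le> level_norm p q r h \<nu>" for \<nu>
    unfolding level_norm_def by (intro nn_Lnorm_mono[OF r] AE_I2 mult_left_mono) auto
  then show ?thesis
    unfolding BBM_nn_norm_def by (intro nn_Lnorm_mono[OF \<tau>] AE_I2) auto
qed

lemma BBM_nn_norm_cong_AE:
  "(AE x in lebesgue. g x = h x) \<Longrightarrow> BBM_nn_norm p \<tau> q r g = BBM_nn_norm p \<tau> q r h"
  by (intro antisym BBM_nn_norm_mono) (auto elim: eventually_mono)

lemma BBM_nn_norm_add:
  assumes [measurable]: "g \<in> borel_measurable lebesgue" "h \<in> borel_measurable lebesgue"
  shows "BBM_nn_norm p \<tau> q r (\<lambda>x. g x + h x) \<le> BBM_nn_norm p \<tau> q r g + BBM_nn_norm p \<tau> q r h"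
proof -
  let ?L = "\<lambda>g \<nu> m. nn_Lnorm lebesgue q (\<lambda>x. g x * indicator (dyadic_cube \<nu> m) x)"
  have "?L (\<lambda>x. g x + h x) \<nu> m \<le> ?L g \<nu> m + ?L h \<nu> m" for \<nu> m
    unfolding distrib_right by (rule nn_Lnorm_add[OF q]) measurable
  then have "cube_weight p q \<nu> m * ?L (\<lambda>x. g x + h x) \<nu> m
      \<le> cube_weight p q \<nu> m * ?L g \<nu> m + cube_weight p q \<nu> m * ?L h \<nu> m" for \<nu> m
    unfolding distrib_left[symmetric] by (rule mult_left_mono) auto
  then have "level_norm p q r (\<lambda>x. g x + h x) \<nu> \<le> level_norm p q r g \<nu> + level_norm p q r h \<nu>" for \<nu>
    unfolding level_norm_def by (intro order_trans[OF nn_Lnorm_mono[OF r] nn_Lnorm_add[OF r]] AE_I2) auto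
  then show ?thesis
    unfolding BBM_nn_norm_def by (intro order_trans[OF nn_Lnorm_mono[OF \<tau>] nn_Lnorm_add[OF \<tau>]] AE_I2) auto
qed

lemma BBM_nn_norm_cmult:
  assumes [measurable]: "g \<in> borel_measurable lebesgue" and "c < top"
  shows "BBM_nn_norm p \<tau> q r (\<lambda>x. c * g x) = c * BBM_nn_norm p \<tau> q r g"
proof -
  have "nn_Lnorm lebesgue q (\<lambda>x. c * g x * indicator (dyadic_cube \<nu> m) x)
      = c * nn_Lnorm lebesgue q (\<lambda>x. g x * indicator (dyadic_cube \<nu> m) x)" for \<nu> m
    unfolding mult.assoc using assms by (intro nn_Lnorm_cmult[OF q]) measurable
  then have "level_norm p q r (\<lambda>x. c * g x) = (\<lambda>\<nu>. c * level_norm p q r g \<nu>)"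
    unfolding level_norm_def using assms by (simp add: mult.left_commute nn_Lnorm_cmult[OF r])
  with assms show ?thesis
    unfolding BBM_nn_norm_def by (simp add: nn_Lnorm_cmult[OF \<tau>])
qed

lemma BBM_nn_norm_zero: "BBM_nn_norm p \<tau> q r (\<lambda>x. 0) = 0"
  using BBM_nn_norm_cmult[of "\<lambda>x. 0" 0] by simp

lemma BBM_nn_norm_AE_zero: "(AE x in lebesgue. g x = 0) \<Longrightarrow> BBM_nn_norm p \<tau> q r g = 0"
  using BBM_nn_norm_cong_AE[of g "\<lambda>x. 0"] BBM_nn_norm_zero by simp

lemma BBM_nn_norm_SUP:
  assumes inc: "\<And>k x. g k x \<le> g (Suc k) x" and [measurable]: "\<And>k. g k \<in> borel_measurable lebesgue"
  shows "BBM_nn_norm p \<tau> q r (\<lambda>x. SUP k. g k x) = (SUP k::nat. BBM_nn_norm p \<tau> q r (g k))"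
proof -
  let ?L = "\<lambda>k \<nu> m. nn_Lnorm lebesgue q (\<lambda>x. g k x * indicator (dyadic_cube \<nu> m) x)"
  have mono_L: "?L k \<nu> m \<le> ?L (Suc k) \<nu> m" for k \<nu> m
    using inc by (intro nn_Lnorm_mono[OF q] AE_I2 mult_right_mono) auto
  have mono_level: "level_norm p q r (g k) \<nu> \<le> level_norm p q r (g (Suc k)) \<nu>" for k \<nu>
    unfolding level_norm_def using mono_L by (intro nn_Lnorm_mono[OF r] AE_I2 mult_left_mono) auto
  have "nn_Lnorm lebesgue q (\<lambda>x. (SUP k. g k x) * indicator (dyadic_cube \<nu> m) x) = (SUP k. ?L k \<nu> m)"
    for \<nu> m
    using inc by (simp add: SUP_mult_right_ennreal nn_Lnorm_SUP[OF q] mult_right_mono)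
  then have "level_norm p q r (\<lambda>x. SUP k. g k x) = (\<lambda>\<nu>. SUP k. level_norm p q r (g k) \<nu>)"
    unfolding level_norm_def using mono_L
    by (simp add: SUP_mult_left_ennreal nn_Lnorm_SUP[OF r] mult_left_mono)
  then show ?thesis
    unfolding BBM_nn_norm_def using mono_level by (simp add: nn_Lnorm_SUP[OF \<tau>])
qed

lemma BBM_nn_norm_AE_SUP:
  assumes "\<And>k. AE x in lebesgue. g k x \<le> g (Suc k) x" and [measurable]: "\<And>k. g k \<in> borel_measurable lebesgue"
  shows "BBM_nn_norm p \<tau> q r (\<lambda>x. SUP k. g k x) = (SUP k::nat. BBM_nn_norm p \<tau> q r (g k))"
proof -
  define G where "G k x = (SUP j\<in>{..k}. g j x)" for k x
  have [measurable]: "G k \<in> borel_measurable lebesgue" for k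
    unfolding G_def by measurable
  have "AE x in lebesgue. \<forall>k. g k x \<le> g (Suc k) x"
    using assms(1) by (simp add: AE_all_countable)
  then have "AE x in lebesgue. \<forall>k. G k x = g k x"
  proof (rule eventually_mono, intro allI)
    fix x k
    assume "\<forall>k. g k x \<le> g (Suc k) x"
    then have "g j x \<le> g k x" if "j \<le> k" for j
      using lift_Suc_mono_le[of "\<lambda>k. g k x"] that by blast
    then show "G k x = g k x"
      unfolding G_def by (intro antisym SUP_least) (auto intro: SUP_upper)
  qed
  then have "BBM_nn_norm p \<tau> q r (G k) = BBM_nn_norm p \<tau> q r (g k)" for k
    by (intro BBM_nn_norm_cong_AE) (auto elim: eventually_mono)
  moreover have "(SUP k. G k x) = (SUP k. g k x)" for x
    unfolding G_def by (intro antisym SUP_least SUP_mono) (auto intro: SUP_upper2)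
  moreover have "G k x \<le> G (Suc k) x" for k x
    unfolding G_def by (rule SUP_subset_mono) auto
  ultimately show ?thesis
    using BBM_nn_norm_SUP[of G] by simp
qed

lemma BBM_nn_norm_sum:
  assumes "finite I" "\<And>i. i \<in> I \<Longrightarrow> g i \<in> borel_measurable lebesgue"
  shows "BBM_nn_norm p \<tau> q r (\<lambda>x. \<Sum>i\<in>I. g i x) \<le> (\<Sum>i\<in>I. BBM_nn_norm p \<tau> q r (g i))"
  using assms
proof (induction I rule: finite_induct)
  case (insert i I)
  then have "BBM_nn_norm p \<tau> q r (\<lambda>x. g i x + (\<Sum>j\<in>I. g j x))
      \<le> BBM_nn_norm p \<tau> q r (g i) + BBM_nn_norm p \<tau> q r (\<lambda>x. \<Sum>j\<in>I. g j x)"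
    by (intro BBM_nn_norm_add) auto
  with insert show ?case
    by (simp add: add_left_mono order_trans)
qed (simp add: BBM_nn_norm_zero)

lemma BBM_nn_norm_suminf:
  assumes [measurable]: "\<And>i. g i \<in> borel_measurable lebesgue"
  shows "BBM_nn_norm p \<tau> q r (\<lambda>x. \<Sum>i. g i x) \<le> (\<Sum>i. BBM_nn_norm p \<tau> q r (g i))"
proof -
  have "BBM_nn_norm p \<tau> q r (\<lambda>x. \<Sum>i. g i x) = (SUP n. BBM_nn_norm p \<tau> q r (\<lambda>x. \<Sum>i<n. g i x))"
    unfolding suminf_eq_SUP by (rule BBM_nn_norm_SUP) auto
  also have "\<dots> \<le> (SUP n. \<Sum>i<n. BBM_nn_norm p \<tau> q r (g i))"
    by (intro SUP_mono' BBM_nn_norm_sum) auto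
  also have "\<dots> = (\<Sum>i. BBM_nn_norm p \<tau> q r (g i))"
    by (rule suminf_eq_SUP[symmetric])
  finally show ?thesis .
qed

lemma nn_Lnorm_unit_cube_le_BBM_nn_norm:
  "nn_Lnorm lebesgue q (\<lambda>x. g x * indicator (dyadic_cube 0 m) x) \<le> BBM_nn_norm p \<tau> q r g"
proof -
  have "cube_weight p q 0 m * nn_Lnorm lebesgue q (\<lambda>x. g x * indicator (dyadic_cube 0 m) x)
      \<le> level_norm p q r g 0"
    unfolding level_norm_def by (rule nn_Lnorm_count_space_ge[OF r])
  also have "\<dots> \<le> BBM_nn_norm p \<tau> q r g"
    unfolding BBM_nn_norm_def by (rule nn_Lnorm_count_space_ge[OF \<tau>])
  finally show ?thesis
    by simp
qed

lemma BBM_nn_norm_eq_0_imp_AE: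
  assumes [measurable]: "g \<in> borel_measurable lebesgue" and "BBM_nn_norm p \<tau> q r g = 0"
  shows "AE x in lebesgue. g x = 0"
proof -
  have "\<forall>m. AE x in lebesgue. g x * indicator (dyadic_cube 0 m) x = 0"
    using nn_Lnorm_unit_cube_le_BBM_nn_norm[of g] assms
    by (intro allI nn_Lnorm_eq_0_imp_AE[OF q]) auto
  then have "AE x in lebesgue. \<forall>m. g x * indicator (dyadic_cube 0 m) x = 0"
    by (rule AE_all_countable[THEN iffD2])
  then show ?thesis
  proof (rule eventually_mono)
    fix x
    assume "\<forall>m. g x * indicator (dyadic_cube 0 m) x = 0"
    then have "g x * indicator (dyadic_cube 0 (cube_index 0 x)) x = 0"
      by blast
    then show "g x = 0"
      by (simp add: mem_dyadic_cube_index)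
  qed
qed

lemma nn_Lnorm_indicator_le_BBM_nn_norm:
  assumes "bounded K"
  obtains C :: real where "\<And>g. g \<in> borel_measurable lebesgue \<Longrightarrow>
    nn_Lnorm lebesgue q (\<lambda>x. g x * indicator K x) \<le> ennreal C * BBM_nn_norm p \<tau> q r g"
proof -
  obtain S where S: "finite S" "K \<subseteq> (\<Union>m\<in>S. dyadic_cube 0 m)"
    using bounded_subset_finite_unit_cubes[OF assms] .
  have "nn_Lnorm lebesgue q (\<lambda>x. g x * indicator K x) \<le> ennreal (card S) * BBM_nn_norm p \<tau> q r g"
    if [measurable]: "g \<in> borel_measurable lebesgue" for g
  proof -
    have "nn_Lnorm lebesgue q (\<lambda>x. g x * indicator K x)
        \<le> nn_Lnorm lebesgue q (\<lambda>x. \<Sum>m\<in>S. g x * indicator (dyadic_cube 0 m) x)"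
      by (intro nn_Lnorm_mono[OF q] AE_I2 indicator_le_sum_dyadic_cubes[OF S])
    also have "\<dots> \<le> (\<Sum>m\<in>S. nn_Lnorm lebesgue q (\<lambda>x. g x * indicator (dyadic_cube 0 m) x))"
      by (rule nn_Lnorm_sum[OF q S(1)]) measurable
    also have "\<dots> \<le> (\<Sum>m\<in>S. BBM_nn_norm p \<tau> q r g)"
      by (intro sum_mono nn_Lnorm_unit_cube_le_BBM_nn_norm)
    finally show ?thesis
      by (simp add: ennreal_of_nat_eq_real_of_nat)
  qed
  then show ?thesis
    using that by blast
qed

lemma nn_integral_indicator_le_BBM_nn_norm:
  assumes "bounded K"
  obtains C :: real where "\<And>g. g \<in> borel_measurable lebesgue \<Longrightarrow>
    (\<integral>\<^sup>+x. g x * indicator K x \<partial>lebesgue) \<le> ennreal C * BBM_nn_norm p \<tau> q r g"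
proof -
  obtain S where S: "finite S" "K \<subseteq> (\<Union>m\<in>S. dyadic_cube 0 m)"
    using bounded_subset_finite_unit_cubes[OF assms] .
  have "(\<integral>\<^sup>+x. g x * indicator K x \<partial>lebesgue) \<le> ennreal (2 * card S) * BBM_nn_norm p \<tau> q r g"
    if [measurable]: "g \<in> borel_measurable lebesgue" for g
  proof -
    have "(\<integral>\<^sup>+x. g x * indicator K x \<partial>lebesgue)
        \<le> (\<integral>\<^sup>+x. (\<Sum>m\<in>S. g x * indicator (dyadic_cube 0 m) x) \<partial>lebesgue)"
      by (intro nn_integral_mono indicator_le_sum_dyadic_cubes[OF S])
    also have "\<dots> = (\<Sum>m\<in>S. \<integral>\<^sup>+x. g x * indicator (dyadic_cube 0 m) x \<partial>lebesgue)"
      by (rule nn_integral_sum) measurable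
    also have "\<dots> \<le> (\<Sum>m\<in>S. 2 * BBM_nn_norm p \<tau> q r g)"
    proof (rule sum_mono)
      fix m
      have "(\<integral>\<^sup>+x. g x * indicator (dyadic_cube 0 m) x \<partial>lebesgue)
          \<le> 2 * nn_Lnorm lebesgue q (\<lambda>x. g x * indicator (dyadic_cube 0 m) x)"
        by (rule nn_integral_le_2_nn_Lnorm[OF q]) (auto simp: emeasure_dyadic_cube)
      also have "\<dots> \<le> 2 * BBM_nn_norm p \<tau> q r g"
        by (intro mult_left_mono nn_Lnorm_unit_cube_le_BBM_nn_norm) auto
      finally show "(\<integral>\<^sup>+x. g x * indicator (dyadic_cube 0 m) x \<partial>lebesgue) \<le> 2 * BBM_nn_norm p \<tau> q r g" .
    qed
    finally show ?thesis
      by (simp add: ennreal_mult ennreal_of_nat_eq_real_of_nat ac_simps)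
  qed
  then show ?thesis
    using that by blast
qed

lemma BBM_nn_norm_finite_imp_AE_finite:
  fixes g :: "real ^ 'n \<Rightarrow> ennreal"
  assumes [measurable]: "g \<in> borel_measurable lebesgue" and "BBM_nn_norm p \<tau> q r g < top"
  shows "AE x in lebesgue. g x \<noteq> top"
proof -
  have "\<forall>k::nat. AE x in lebesgue. x \<in> ball 0 (real k) \<longrightarrow> g x \<noteq> top"
  proof
    fix k :: nat
    obtain C where C: "\<And>h :: real ^ 'n \<Rightarrow> ennreal. h \<in> borel_measurable lebesgue \<Longrightarrow>
        (\<integral>\<^sup>+x. h x * indicator (ball 0 (real k)) x \<partial>lebesgue) \<le> ennreal C * BBM_nn_norm p \<tau> q r h"
      using nn_integral_indicator_le_BBM_nn_norm[OF bounded_ball[of 0 "real k"]] by blast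
    have "(\<integral>\<^sup>+x. g x * indicator (ball 0 (real k)) x \<partial>lebesgue) \<le> ennreal C * BBM_nn_norm p \<tau> q r g"
      by (rule C) measurable
    also have "\<dots> < top"
      using assms by (simp add: ennreal_mult_less_top)
    finally have "(\<integral>\<^sup>+x. g x * indicator (ball 0 (real k)) x \<partial>lebesgue) \<noteq> top"
      by simp
    moreover have "(\<lambda>x. g x * indicator (ball 0 (real k)) x) \<in> borel_measurable lebesgue"
      using fmeasurableD[OF lmeasurable_ball] by measurable
    ultimately have "AE x in lebesgue. g x * indicator (ball 0 (real k)) x \<noteq> top"
      using nn_integral_PInf_AE by simp
    then show "AE x in lebesgue. x \<in> ball 0 (real k) \<longrightarrow> g x \<noteq> top"
      by (rule eventually_mono) (auto split: split_indicator)
  qed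
  then have "AE x in lebesgue. \<forall>k::nat. x \<in> ball 0 (real k) \<longrightarrow> g x \<noteq> top"
    by (rule AE_all_countable[THEN iffD2])
  then show ?thesis
  proof (rule eventually_mono)
    fix x :: "real ^ 'n"
    obtain k :: nat where "norm x < real k"
      using reals_Archimedean2 by blast
    then show "\<forall>k::nat. x \<in> ball 0 (real k) \<longrightarrow> g x \<noteq> top \<Longrightarrow> g x \<noteq> top"
      by auto
  qed
qed

lemma BBM_norm_finite_imp_Lq_loc:
  fixes f :: "real ^ 'n \<Rightarrow> real"
  assumes [measurable]: "f \<in> borel_measurable lebesgue" and "BBM_norm p \<tau> q r f < top"
  shows "Lq_loc q f"
  unfolding Lq_loc_def
proof (intro conjI allI impI)
  fix K :: "(real ^ 'n) set"
  assume "compact K"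
  then obtain C :: real where "\<And>g. g \<in> borel_measurable lebesgue \<Longrightarrow>
      nn_Lnorm lebesgue q (\<lambda>x. g x * indicator K x) \<le> ennreal C * BBM_nn_norm p \<tau> q r g"
    using nn_Lnorm_indicator_le_BBM_nn_norm[OF compact_imp_bounded] by blast
  then have "Lq_norm q K f \<le> ennreal C * BBM_norm p \<tau> q r f"
    by (simp add: Lq_norm_eq_nn_Lnorm[OF q] BBM_norm_eq_BBM_nn_norm[OF q])
  also have "\<dots> < top"
    using assms by (simp add: ennreal_mult_less_top)
  finally show "Lq_norm q K f < top" .
qed simp

lemma BBM_space_subset_measurable: "BBM_space p \<tau> q r \<subseteq> borel_measurable lebesgue"
  unfolding BBM_space_def Lq_loc_def by auto

lemma BBM_space_iff:
  "f \<in> borel_measurable lebesgue \<Longrightarrow> f \<in> BBM_space p \<tau> q r \<longleftrightarrow> BBM_norm p \<tau> q r f < top"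
  unfolding BBM_space_def using BBM_norm_finite_imp_Lq_loc by auto

lemma BBM_norm_mono:
  "(AE x in lebesgue. \<bar>g x\<bar> \<le> \<bar>f x\<bar>) \<Longrightarrow> BBM_norm p \<tau> q r g \<le> BBM_norm p \<tau> q r f"
  unfolding BBM_norm_eq_BBM_nn_norm[OF q]
  by (intro BBM_nn_norm_mono) (auto elim!: eventually_mono intro: ennreal_leI)

lemma BBM_norm_cmult:
  "f \<in> borel_measurable lebesgue \<Longrightarrow> BBM_norm p \<tau> q r (\<lambda>x. c * f x) = ennreal \<bar>c\<bar> * BBM_norm p \<tau> q r f"
  unfolding BBM_norm_eq_BBM_nn_norm[OF q]
  by (simp add: abs_mult ennreal_mult BBM_nn_norm_cmult)

lemma BBM_norm_eq_0_imp_AE: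
  assumes "f \<in> borel_measurable lebesgue" "BBM_norm p \<tau> q r f = 0"
  shows "AE x in lebesgue. f x = 0"
  using BBM_nn_norm_eq_0_imp_AE[of "\<lambda>x. ennreal \<bar>f x\<bar>"] assms
  by (auto simp: BBM_norm_eq_BBM_nn_norm[OF q] elim!: eventually_mono)

lemma BBM_norm_triangle:
  assumes [measurable]: "f \<in> borel_measurable lebesgue" "g \<in> borel_measurable lebesgue"
  shows "BBM_norm p \<tau> q r (\<lambda>x. f x + g x) \<le> BBM_norm p \<tau> q r f + BBM_norm p \<tau> q r g"
proof -
  have "BBM_nn_norm p \<tau> q r (\<lambda>x. ennreal \<bar>f x + g x\<bar>)
      \<le> BBM_nn_norm p \<tau> q r (\<lambda>x. ennreal \<bar>f x\<bar> + ennreal \<bar>g x\<bar>)"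
    by (intro BBM_nn_norm_mono AE_I2) (simp add: ennreal_leI flip: ennreal_plus)
  also have "\<dots> \<le> BBM_nn_norm p \<tau> q r (\<lambda>x. ennreal \<bar>f x\<bar>) + BBM_nn_norm p \<tau> q r (\<lambda>x. ennreal \<bar>g x\<bar>)"
    by (rule BBM_nn_norm_add) measurable
  finally show ?thesis
    unfolding BBM_norm_eq_BBM_nn_norm[OF q] .
qed

lemma BBM_norm_integral_ball_le:
  fixes c :: "real ^ 'n"
  shows "\<exists>C::real. \<forall>f \<in> BBM_space p \<tau> q r.
    (\<integral>\<^sup>+x. ennreal \<bar>f x\<bar> * indicator (ball c \<rho>) x \<partial>lebesgue) \<le> ennreal C * BBM_norm p \<tau> q r f"
proof -
  obtain C :: real where C: "\<And>g :: real ^ 'n \<Rightarrow> ennreal. g \<in> borel_measurable lebesgue \<Longrightarrow>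
      (\<integral>\<^sup>+x. g x * indicator (ball c \<rho>) x \<partial>lebesgue) \<le> ennreal C * BBM_nn_norm p \<tau> q r g"
    using nn_integral_indicator_le_BBM_nn_norm[OF bounded_ball] by blast
  have "(\<integral>\<^sup>+x. ennreal \<bar>f x\<bar> * indicator (ball c \<rho>) x \<partial>lebesgue) \<le> ennreal C * BBM_norm p \<tau> q r f"
    if "f \<in> BBM_space p \<tau> q r" for f
  proof -
    have [measurable]: "f \<in> borel_measurable lebesgue"
      using that BBM_space_subset_measurable by blast
    show ?thesis
      unfolding BBM_norm_eq_BBM_nn_norm[OF q] by (rule C) measurable
  qed
  then show ?thesis
    by blast
qed

lemma BBM_norm_monotone_convergence:
  fixes F :: "nat \<Rightarrow> real ^ 'n \<Rightarrow> real"
  assumes [measurable]: "\<And>k. F k \<in> borel_measurable lebesgue" "f \<in> borel_measurable lebesgue"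
    and mono: "\<And>k. AE x in lebesgue. 0 \<le> F k x \<and> F k x \<le> F (Suc k) x"
    and lim: "AE x in lebesgue. (\<lambda>k. F k x) \<longlonglongrightarrow> f x"
  shows "incseq (\<lambda>k. BBM_norm p \<tau> q r (F k)) \<and> (\<lambda>k. BBM_norm p \<tau> q r (F k)) \<longlonglongrightarrow> BBM_norm p \<tau> q r f"
proof -
  have mono_abs: "AE x in lebesgue. \<bar>F k x\<bar> \<le> \<bar>F (Suc k) x\<bar>" for k
    using mono[of k] by (rule eventually_mono) auto
  then have inc: "AE x in lebesgue. ennreal \<bar>F k x\<bar> \<le> ennreal \<bar>F (Suc k) x\<bar>" for k
    by (rule eventually_mono) (rule ennreal_leI)
  have "AE x in lebesgue. (\<forall>k. 0 \<le> F k x \<and> F k x \<le> F (Suc k) x) \<and> (\<lambda>k. F k x) \<longlonglongrightarrow> f x"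
    using mono lim by (simp add: AE_all_countable)
  then have "AE x in lebesgue. (SUP k. ennreal \<bar>F k x\<bar>) = ennreal \<bar>f x\<bar>"
  proof (rule eventually_mono)
    fix x
    assume x: "(\<forall>k. 0 \<le> F k x \<and> F k x \<le> F (Suc k) x) \<and> (\<lambda>k. F k x) \<longlonglongrightarrow> f x"
    then have "incseq (\<lambda>k. ennreal \<bar>F k x\<bar>)"
      by (intro incseq_SucI ennreal_leI) auto
    moreover have "(\<lambda>k. ennreal \<bar>F k x\<bar>) \<longlonglongrightarrow> ennreal \<bar>f x\<bar>"
      using x by (intro tendsto_ennrealI tendsto_rabs) auto
    ultimately show "(SUP k. ennreal \<bar>F k x\<bar>) = ennreal \<bar>f x\<bar>"
      using LIMSEQ_SUP LIMSEQ_unique by blast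
  qed
  then have "BBM_nn_norm p \<tau> q r (\<lambda>x. ennreal \<bar>f x\<bar>)
      = BBM_nn_norm p \<tau> q r (\<lambda>x. SUP k. ennreal \<bar>F k x\<bar>)"
    by (intro BBM_nn_norm_cong_AE) (auto elim: eventually_mono)
  also have "\<dots> = (SUP k. BBM_nn_norm p \<tau> q r (\<lambda>x. ennreal \<bar>F k x\<bar>))"
    by (rule BBM_nn_norm_AE_SUP[of "\<lambda>k x. ennreal \<bar>F k x\<bar>", OF inc]) measurable
  finally have "BBM_norm p \<tau> q r f = (SUP k. BBM_norm p \<tau> q r (F k))"
    unfolding BBM_norm_eq_BBM_nn_norm[OF q] .
  moreover have "incseq (\<lambda>k. BBM_norm p \<tau> q r (F k))"
    by (intro incseq_SucI BBM_norm_mono mono_abs)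
  ultimately show ?thesis
    using LIMSEQ_SUP by simp
qed

lemma BBM_norm_fast_Cauchy_limit:
  fixes F :: "nat \<Rightarrow> real ^ 'n \<Rightarrow> real"
  assumes [measurable]: "\<And>j. F j \<in> borel_measurable lebesgue"
    and fast: "\<And>j. BBM_norm p \<tau> q r (\<lambda>x. F (Suc j) x - F j x) \<le> ennreal ((1 / 2) ^ j)"
  obtains f where "f \<in> borel_measurable lebesgue"
    and "\<And>j. BBM_norm p \<tau> q r (\<lambda>x. F j x - f x) \<le> ennreal (2 * (1 / 2) ^ j)"
proof -
  define T where "T j x = (\<Sum>i. ennreal \<bar>F (Suc (i + j)) x - F (i + j) x\<bar>)" for j x
  have [measurable]: "T j \<in> borel_measurable lebesgue" for j
    unfolding T_def by measurable
  have T_norm: "BBM_nn_norm p \<tau> q r (T j) \<le> ennreal (2 * (1 / 2) ^ j)" for j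
  proof -
    have "BBM_nn_norm p \<tau> q r (T j) \<le> (\<Sum>i. BBM_norm p \<tau> q r (\<lambda>x. F (Suc (i + j)) x - F (i + j) x))"
      unfolding T_def BBM_norm_eq_BBM_nn_norm[OF q] by (rule BBM_nn_norm_suminf) measurable
    also have "\<dots> \<le> (\<Sum>i. ennreal ((1 / 2) ^ (i + j)))"
      by (intro suminf_le summableI fast)
    finally show ?thesis
      unfolding suminf_ennreal_half_power .
  qed
  have "AE x in lebesgue. T 0 x \<noteq> top"
    using T_norm[of 0] by (intro BBM_nn_norm_finite_imp_AE_finite)
      (auto simp: le_less_trans)
  then have "AE x in lebesgue. \<forall>j. ennreal \<bar>F j x - lim (\<lambda>j. F j x)\<bar> \<le> T j x"
  proof (rule eventually_mono, intro allI)
    fix x j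
    assume "T 0 x \<noteq> top"
    then have sum: "summable (\<lambda>i. \<bar>F (Suc i) x - F i x\<bar>)"
      by (intro summable_suminf_not_top) (auto simp: T_def)
    then have "\<bar>F j x - lim (\<lambda>j. F j x)\<bar> \<le> (\<Sum>i. \<bar>F (Suc (i + j)) x - F (i + j) x\<bar>)"
      by (rule abs_diff_lim_le_suminf)
    also have "ennreal \<dots> = T j x"
      using summable_ignore_initial_segment[OF sum, of j] by (simp add: T_def suminf_ennreal2)
    finally show "ennreal \<bar>F j x - lim (\<lambda>j. F j x)\<bar> \<le> T j x"
      by (simp add: ennreal_leI)
  qed
  then have "BBM_norm p \<tau> q r (\<lambda>x. F j x - lim (\<lambda>j. F j x)) \<le> BBM_nn_norm p \<tau> q r (T j)" for j
    unfolding BBM_norm_eq_BBM_nn_norm[OF q]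
    by (intro BBM_nn_norm_mono) (auto elim!: eventually_mono)
  moreover have "(\<lambda>x. lim (\<lambda>j. F j x)) \<in> borel_measurable lebesgue"
    by measurable
  ultimately show ?thesis
    using that T_norm order_trans by blast
qed

lemma BBM_space_complete:
  fixes F :: "nat \<Rightarrow> real ^ 'n \<Rightarrow> real"
  assumes F: "\<And>k. F k \<in> BBM_space p \<tau> q r"
    and Cauchy: "\<forall>e>0. \<exists>K. \<forall>k\<ge>K. \<forall>l\<ge>K. BBM_norm p \<tau> q r (\<lambda>x. F k x - F l x) < e"
  shows "\<exists>f \<in> BBM_space p \<tau> q r. (\<lambda>k. BBM_norm p \<tau> q r (\<lambda>x. F k x - f x)) \<longlonglongrightarrow> 0"
proof -
  let ?N = "BBM_norm p \<tau> q r"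
  have F_meas [measurable]: "F k \<in> borel_measurable lebesgue" for k
    using F BBM_space_subset_measurable by blast
  obtain \<phi> where \<phi>: "\<And>j. \<phi> j \<le> \<phi> (Suc j)"
    and close: "\<And>j k l. \<phi> j \<le> k \<Longrightarrow> \<phi> j \<le> l \<Longrightarrow> ?N (\<lambda>x. F k x - F l x) < ennreal ((1 / 2) ^ j)"
    using fast_Cauchy_subseq[OF Cauchy] by blast
  obtain f where f_meas [measurable]: "f \<in> borel_measurable lebesgue"
    and f: "\<And>j. ?N (\<lambda>x. F (\<phi> j) x - f x) \<le> ennreal (2 * (1 / 2) ^ j)"
  proof (rule BBM_norm_fast_Cauchy_limit[of "\<lambda>j. F (\<phi> j)", OF F_meas])
    show "?N (\<lambda>x. F (\<phi> (Suc j)) x - F (\<phi> j) x) \<le> ennreal ((1 / 2) ^ j)" for j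
      using close[of j "\<phi> (Suc j)" "\<phi> j"] \<phi> by simp
  qed blast
  have diff: "?N (\<lambda>x. F k x - f x) \<le> ?N (\<lambda>x. F k x - F l x) + ?N (\<lambda>x. F l x - f x)" for k l
    using BBM_norm_triangle[of "\<lambda>x. F k x - F l x" "\<lambda>x. F l x - f x"] by simp
  have "?N f \<le> ?N (F (\<phi> 0)) + ?N (\<lambda>x. F (\<phi> 0) x - f x)"
    using BBM_norm_triangle[of "F (\<phi> 0)" "\<lambda>x. f x - F (\<phi> 0) x"]
      BBM_norm_mono[of "\<lambda>x. f x - F (\<phi> 0) x" "\<lambda>x. F (\<phi> 0) x - f x"]
    by (simp add: add_left_mono order_trans)
  also have "\<dots> < top"
    using F[of "\<phi> 0"] f[of 0] BBM_space_iff[OF F_meas] by (simp add: le_less_trans)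
  finally have "f \<in> BBM_space p \<tau> q r"
    using BBM_space_iff[OF f_meas] by simp
  moreover have "?N (\<lambda>x. F k x - f x) \<le> ennreal (3 * (1 / 2) ^ j)" if "\<phi> j \<le> k" for j k
  proof -
    have "?N (\<lambda>x. F k x - f x) \<le> ennreal ((1 / 2) ^ j) + ennreal (2 * (1 / 2) ^ j)"
      using diff[of k "\<phi> j"] close[OF that order_refl] f[of j] by (meson add_mono less_imp_le order_trans)
    then show ?thesis
      by (simp flip: ennreal_plus)
  qed
  then have "(\<lambda>k. ?N (\<lambda>x. F k x - f x)) \<longlonglongrightarrow> 0"
    by (rule LIMSEQ_zero_if_le_geometric)
  ultimately show ?thesis
    by blast
qed

end

lemma powr_le_powr_minus_1_mult:
  fixes y M t :: real
  assumes "0 \<le> y" "y \<le> M" "1 \<le> t"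
  shows "y powr t \<le> M powr (t - 1) * y"
proof (cases "y = 0")
  case False
  then have "y powr t = y powr (t - 1) * y"
    using assms powr_mult_base[of y "t - 1"] by (simp add: mult.commute)
  also have "\<dots> \<le> M powr (t - 1) * y"
    using assms by (intro mult_right_mono powr_mono2) auto
  finally show ?thesis .
qed (use assms in simp)

lemma nn_Lnorm_count_space_powr_le:
  fixes y :: "'i \<Rightarrow> real"
  assumes r: "1 \<le> r" and a: "0 < a" "r \<noteq> top \<Longrightarrow> 1 \<le> a * enn2real r"
    and M: "0 < M" "\<And>i. y i \<le> M" and y: "\<And>i. 0 \<le> y i" and W: "0 \<le> W" and "0 < \<mu>"
    and sum: "(\<integral>\<^sup>+i. ennreal (y i) \<partial>count_space UNIV) = ennreal \<mu>"
  shows "nn_Lnorm (count_space UNIV) r (\<lambda>i. ennreal (W * y i powr a))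
    \<le> ennreal (W * M powr (a - enn2real (1 / r)) * \<mu> powr enn2real (1 / r))"
proof (cases "r = top")
  case True
  have "W * y i powr a \<le> W * M powr a" for i
    using a M y W by (intro mult_left_mono powr_mono2) auto
  with True \<open>0 < \<mu>\<close> show ?thesis
    by (auto simp: nn_Lnorm_def ess_sup_count_space intro!: SUP_least ennreal_leI)
next
  case False
  define \<rho> where "\<rho> = enn2real r"
  have \<rho>: "1 \<le> \<rho>" "enn2real (1 / r) = 1 / \<rho>"
    using enn2real_ge_1[OF r False] enn2real_inverse[OF r] False by (auto simp: \<rho>_def)
  have t: "1 \<le> a * \<rho>"
    using a False by (simp add: \<rho>_def)
  have "y i powr (a * \<rho>) \<le> M powr (a * \<rho> - 1) * y i" for i
    using powr_le_powr_minus_1_mult[OF y[of i] M(2)[of i] t] .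
  then have "(\<integral>\<^sup>+i. epow (ennreal (W * y i powr a)) \<rho> \<partial>count_space UNIV)
      \<le> (\<integral>\<^sup>+i. ennreal (W powr \<rho> * M powr (a * \<rho> - 1)) * ennreal (y i) \<partial>count_space UNIV)"
    using W y \<rho> by (intro nn_integral_mono)
      (auto simp: epow_ennreal powr_mult powr_powr mult.assoc ennreal_leI mult_left_mono
        simp flip: ennreal_mult)
  also have "\<dots> = ennreal (W powr \<rho> * M powr (a * \<rho> - 1) * \<mu>)"
    using sum \<open>0 < \<mu>\<close> by (simp add: nn_integral_cmult ennreal_mult)
  finally have "nn_Lnorm (count_space UNIV) r (\<lambda>i. ennreal (W * y i powr a))
      \<le> ennreal ((W powr \<rho> * M powr (a * \<rho> - 1) * \<mu>) powr (1 / \<rho>))"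
    using False \<rho> \<open>0 < \<mu>\<close>
    by (auto simp: nn_Lnorm_def nn_Lp_norm_def \<rho>_def[symmetric] epow_ennreal dest: epow_mono[of _ _ "1 / \<rho>"])
  also have "(W powr \<rho> * M powr (a * \<rho> - 1) * \<mu>) powr (1 / \<rho>) = W * M powr (a - 1 / \<rho>) * \<mu> powr (1 / \<rho>)"
    using W M \<rho> \<open>0 < \<mu>\<close> by (simp add: powr_mult powr_powr diff_divide_distrib)
  finally show ?thesis
    using \<rho> by simp
qed

lemma nn_Lnorm_indicator:
  assumes "1 \<le> q" "q \<noteq> top" "B \<in> fmeasurable M"
  shows "nn_Lnorm M q (indicator B) = ennreal (measure M B powr enn2real (1 / q))"
proof -
  have "1 \<le> enn2real q"
    using enn2real_ge_1 assms by blast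
  then have "(\<lambda>x. epow (indicator B x) (enn2real q)) = indicator B"
    by (auto simp: fun_eq_iff split: split_indicator)
  with assms \<open>1 \<le> enn2real q\<close> show ?thesis
    by (simp add: nn_Lnorm_def nn_Lp_norm_def emeasure_eq_measure2 epow_ennreal enn2real_inverse)
qed

lemma dyadic_cube_lmeasurable: "dyadic_cube \<nu> m \<in> lmeasurable"
  by (simp add: fmeasurable_def emeasure_dyadic_cube)

lemma nn_integral_measure_Int_dyadic_cube:
  assumes "E \<in> lmeasurable"
  shows "(\<integral>\<^sup>+m. ennreal (measure lebesgue (E \<inter> dyadic_cube \<nu> m)) \<partial>count_space UNIV)
    = ennreal (measure lebesgue E)"
proof -
  have Int: "E \<inter> dyadic_cube \<nu> m \<in> lmeasurable" for m
    using assms by (intro fmeasurable_Int_fmeasurable) auto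
  have "ennreal (measure lebesgue E) = emeasure lebesgue (\<Union>m. E \<inter> dyadic_cube \<nu> m)"
    using assms by (simp add: emeasure_eq_measure2 UN_dyadic_cube flip: Int_UN_distrib)
  also have "\<dots> = (\<integral>\<^sup>+m. emeasure lebesgue (E \<inter> dyadic_cube \<nu> m) \<partial>count_space UNIV)"
    using Int by (intro emeasure_UN_countable) (auto simp: disjoint_family_on_def dyadic_cube_iff_cube_index)
  finally show ?thesis
    using Int by (simp add: emeasure_eq_measure2)
qed

lemma level_norm_indicator_exponent_top:
  fixes E :: "(real ^ 'n) set"
  shows "level_norm p top top (indicator E) \<nu>
    \<le> ennreal (2 powr (real_of_int \<nu> * CARD('n) * enn2real (1 / p)))"
proof -
  have "ess_sup lebesgue (\<lambda>x. indicator E x * indicator (dyadic_cube \<nu> m) x) \<le> 1" for m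
    by (intro ess_sup_le AE_I2) (auto split: split_indicator)
  then have "cube_weight p top \<nu> m * ess_sup lebesgue (\<lambda>x. indicator E x * indicator (dyadic_cube \<nu> m) x)
      \<le> ennreal (2 powr (real_of_int \<nu> * CARD('n) * enn2real (1 / p)))" for m :: "int ^ 'n"
    using mult_left_mono[of _ 1 "cube_weight p top \<nu> m"]
    by (simp add: cube_weight_def measure_dyadic_cube powr_powr)
  then show ?thesis
    by (auto simp: level_norm_def nn_Lnorm_def ess_sup_count_space intro!: SUP_least)
qed

lemma level_norm_indicator_eq:
  fixes E :: "(real ^ 'n) set"
  assumes "E \<in> lmeasurable" "1 \<le> q" "q \<noteq> top"
  shows "level_norm p q r (indicator E) \<nu> = nn_Lnorm (count_space UNIV) r (\<lambda>m::int ^ 'n.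
    ennreal (2 powr (real_of_int \<nu> * CARD('n) * (enn2real (1 / p) - enn2real (1 / q)))
      * measure lebesgue (E \<inter> dyadic_cube \<nu> m) powr enn2real (1 / q)))"
proof -
  have "nn_Lnorm lebesgue q (\<lambda>x. indicator E x * indicator (dyadic_cube \<nu> m) x)
      = ennreal (measure lebesgue (E \<inter> dyadic_cube \<nu> m) powr enn2real (1 / q))" for m
  proof -
    have "E \<inter> dyadic_cube \<nu> m \<in> lmeasurable"
      using assms by (intro fmeasurable_Int_fmeasurable) auto
    moreover have "(\<lambda>x. indicator E x * indicator (dyadic_cube \<nu> m) x :: ennreal)
        = indicator (E \<inter> dyadic_cube \<nu> m)"
      by (auto split: split_indicator)
    ultimately show ?thesis
      using nn_Lnorm_indicator[OF assms(2,3)] by simp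
  qed
  then show ?thesis
    by (simp add: level_norm_def cube_weight_def measure_dyadic_cube powr_powr ennreal_mult)
qed

lemma level_norm_indicator_le:
  fixes E :: "(real ^ 'n) set" and p q r :: ennreal
  defines "\<mu> \<equiv> measure lebesgue E"
    and "P \<equiv> enn2real (1 / p)" and "Q \<equiv> enn2real (1 / q)" and "R \<equiv> enn2real (1 / r)"
  assumes E: "E \<in> lmeasurable" "0 < \<mu>" and q: "1 \<le> q" and "q \<le> r"
  shows "level_norm p q r (indicator E) \<nu> \<le> ennreal (2 powr (real_of_int \<nu> * CARD('n) * (P - R)) * \<mu> powr R)"
    and "level_norm p q r (indicator E) \<nu> \<le> ennreal (2 powr (real_of_int \<nu> * CARD('n) * (P - Q)) * \<mu> powr Q)"
proof -
  define D where "D = 2 powr (real_of_int \<nu> * CARD('n))"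
  define y where "y m = measure lebesgue (E \<inter> dyadic_cube \<nu> m)" for m :: "int ^ 'n"
  have D: "0 < D" "D powr x = 2 powr (real_of_int \<nu> * CARD('n) * x)" for x
    by (auto simp: D_def powr_powr)
  have "level_norm p q r (indicator E) \<nu> \<le> ennreal (D powr (P - R) * \<mu> powr R)
      \<and> level_norm p q r (indicator E) \<nu> \<le> ennreal (D powr (P - Q) * \<mu> powr Q)"
  proof (cases "q = top")
    case True
    then have "r = top" "Q = 0" "R = 0"
      using \<open>q \<le> r\<close> by (auto simp: Q_def R_def top_unique)
    with True level_norm_indicator_exponent_top[of p E \<nu>] \<open>0 < \<mu>\<close> show ?thesis
      by (simp add: D P_def)
  next
    case False
    have Q: "1 \<le> Q * enn2real r" if "r \<noteq> top"
    proof -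
      have "enn2real q \<le> enn2real r"
        using \<open>q \<le> r\<close> that by (intro enn2real_mono) (auto simp: top.not_eq_extremum)
      with enn2real_ge_1[OF q False] show ?thesis
        by (simp add: Q_def enn2real_inverse[OF q] False)
    qed
    have y: "0 \<le> y m" "y m \<le> \<mu>" "y m \<le> D" for m
      using measure_mono_fmeasurable[of "E \<inter> dyadic_cube \<nu> m" E lebesgue]
        measure_mono_fmeasurable[of "E \<inter> dyadic_cube \<nu> m" "dyadic_cube \<nu> m" lebesgue] E
      by (auto simp: y_def \<mu>_def D_def dyadic_cube_lmeasurable measure_dyadic_cube)
    have "level_norm p q r (indicator E) \<nu> \<le> ennreal (D powr (P - Q) * M powr (Q - R) * \<mu> powr R)"
      if "0 < M" "\<And>m. y m \<le> M" for M
      unfolding level_norm_indicator_eq[OF E(1) q False] D(2)[symmetric] y_def[symmetric]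
        P_def[symmetric] Q_def[symmetric] R_def
      using Q that y \<open>0 < \<mu>\<close> q \<open>q \<le> r\<close> nn_integral_measure_Int_dyadic_cube[OF E(1)] enn2real_ge_1[OF q False]
      by (intro nn_Lnorm_count_space_powr_le) (auto simp: y_def \<mu>_def Q_def enn2real_inverse[OF q])
    from this[of D] this[of \<mu>] show ?thesis
      using D y \<open>0 < \<mu>\<close> by (simp add: mult.assoc powr_add[symmetric] distrib_left[symmetric])
  qed
  then show "level_norm p q r (indicator E) \<nu>
      \<le> ennreal (2 powr (real_of_int \<nu> * CARD('n) * (P - R)) * \<mu> powr R)"
    and "level_norm p q r (indicator E) \<nu>
      \<le> ennreal (2 powr (real_of_int \<nu> * CARD('n) * (P - Q)) * \<mu> powr Q)"
    by (simp_all add: D)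
qed

lemma level_norm_indicator_decay:
  fixes E :: "(real ^ 'n) set" and p q r :: ennreal
  defines "\<mu> \<equiv> measure lebesgue E"
  assumes "E \<in> lmeasurable" "0 < \<mu>" "1 \<le> q" "q \<le> r"
    and \<gamma>: "\<gamma> \<le> enn2real (1 / p) - enn2real (1 / r)" "\<gamma> \<le> enn2real (1 / q) - enn2real (1 / p)"
  shows "level_norm p q r (indicator E) \<nu>
    \<le> ennreal ((\<mu> powr enn2real (1 / r) + \<mu> powr enn2real (1 / q))
                 * 2 powr (- (\<bar>real_of_int \<nu>\<bar> * CARD('n) * \<gamma>)))"
proof -
  define a where "a = real_of_int \<nu> * CARD('n)"
  let ?C = "\<mu> powr enn2real (1 / r) + \<mu> powr enn2real (1 / q)"
  have bound: "ennreal (2 powr (a * x) * \<mu> powr y)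
      \<le> ennreal (?C * 2 powr (- (\<bar>real_of_int \<nu>\<bar> * CARD('n) * \<gamma>)))"
    if "a * x \<le> - (\<bar>real_of_int \<nu>\<bar> * CARD('n) * \<gamma>)" "\<mu> powr y \<le> ?C" for x y
    using that by (intro ennreal_leI) (auto simp: mult.commute intro!: mult_mono)
  show ?thesis
  proof (cases "\<nu> \<le> 0")
    case True
    then have "a * (enn2real (1 / p) - enn2real (1 / r)) \<le> a * \<gamma>"
      using \<gamma> by (intro mult_left_mono_neg) (auto simp: a_def mult_nonpos_nonneg)
    with True have "a * (enn2real (1 / p) - enn2real (1 / r)) \<le> - (\<bar>real_of_int \<nu>\<bar> * CARD('n) * \<gamma>)"
      by (simp add: a_def)
    then have "ennreal (2 powr (a * (enn2real (1 / p) - enn2real (1 / r))) * \<mu> powr enn2real (1 / r))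
        \<le> ennreal (?C * 2 powr (- (\<bar>real_of_int \<nu>\<bar> * CARD('n) * \<gamma>)))"
      by (rule bound) simp
    with level_norm_indicator_le(1)[OF assms(2-5)[unfolded \<mu>_def], of p \<nu>, folded \<mu>_def] show ?thesis
      unfolding a_def by (rule order_trans)
  next
    case False
    then have "a * (enn2real (1 / p) - enn2real (1 / q)) \<le> a * (- \<gamma>)"
      using \<gamma> by (intro mult_left_mono) (auto simp: a_def)
    with False have "a * (enn2real (1 / p) - enn2real (1 / q)) \<le> - (\<bar>real_of_int \<nu>\<bar> * CARD('n) * \<gamma>)"
      by (simp add: a_def)
    then have "ennreal (2 powr (a * (enn2real (1 / p) - enn2real (1 / q))) * \<mu> powr enn2real (1 / q))
        \<le> ennreal (?C * 2 powr (- (\<bar>real_of_int \<nu>\<bar> * CARD('n) * \<gamma>)))"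
      by (rule bound) simp
    with level_norm_indicator_le(2)[OF assms(2-5)[unfolded \<mu>_def], of p \<nu>, folded \<mu>_def] show ?thesis
      unfolding a_def by (rule order_trans)
  qed
qed

lemma nn_integral_count_space_int_geometric_finite:
  fixes \<rho> :: real
  assumes "0 \<le> \<rho>" "\<rho> < 1"
  shows "(\<integral>\<^sup>+\<nu>. ennreal (\<rho> ^ nat \<bar>\<nu> :: int\<bar>) \<partial>count_space UNIV) < top"
proof -
  define \<sigma> where "\<sigma> = sqrt \<rho>"
  have \<sigma>: "0 \<le> \<sigma>" "\<sigma> < 1" "\<rho> = \<sigma>\<^sup>2"
    using assms by (auto simp: \<sigma>_def)
  have "(\<integral>\<^sup>+\<nu>. ennreal (\<rho> ^ nat \<bar>\<nu> :: int\<bar>) \<partial>count_space UNIV)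
      = (\<integral>\<^sup>+k. ennreal (\<rho> ^ nat \<bar>int_decode k\<bar>) \<partial>count_space UNIV)"
    by (rule nn_integral_bij_count_space[symmetric]) (rule bij_int_decode)
  also have "\<dots> \<le> (\<integral>\<^sup>+k. ennreal (\<sigma> ^ k) \<partial>count_space UNIV)"
  proof (rule nn_integral_mono)
    fix k
    have "k \<le> 2 * nat \<bar>int_decode k\<bar>"
      unfolding int_decode_def sum_decode_def by (auto split: if_splits)
    then have "\<sigma> ^ (2 * nat \<bar>int_decode k\<bar>) \<le> \<sigma> ^ k"
      using \<sigma> by (intro power_decreasing) auto
    then show "ennreal (\<rho> ^ nat \<bar>int_decode k\<bar>) \<le> ennreal (\<sigma> ^ k)"
      using \<sigma> by (intro ennreal_leI) (simp add: power_mult)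
  qed
  also have "\<dots> = ennreal (\<Sum>k. \<sigma> ^ k)"
    using \<sigma> by (simp add: nn_integral_count_space_nat suminf_ennreal2)
  finally show ?thesis
    by (simp add: le_less_trans)
qed

lemma nn_Lnorm_count_space_int_decay_finite:
  fixes g :: "int \<Rightarrow> ennreal"
  assumes \<tau>: "1 \<le> \<tau>" "\<tau> \<noteq> top" and "0 < c" "0 \<le> C"
    and g: "\<And>\<nu>. g \<nu> \<le> ennreal (C * 2 powr (- (\<bar>real_of_int \<nu>\<bar> * c)))"
  shows "nn_Lnorm (count_space UNIV) \<tau> g < top"
proof -
  define t where "t = enn2real \<tau>"
  define \<rho> where "\<rho> = 2 powr (- (c * t))"
  have t: "1 \<le> t"
    using enn2real_ge_1[OF \<tau>] by (simp add: t_def)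
  have "0 < c * t"
    using \<open>0 < c\<close> t by simp
  then have \<rho>: "0 \<le> \<rho>" "\<rho> < 1"
    using powr_less_mono[of "- (c * t)" 0 2] by (auto simp: \<rho>_def)
  have "epow (g \<nu>) t \<le> ennreal (C powr t) * ennreal (\<rho> ^ nat \<bar>\<nu>\<bar>)" for \<nu>
  proof -
    have "epow (g \<nu>) t \<le> epow (ennreal (C * 2 powr (- (\<bar>real_of_int \<nu>\<bar> * c)))) t"
      using t g by (intro epow_mono) auto
    also have "\<dots> = ennreal (C powr t * \<rho> ^ nat \<bar>\<nu>\<bar>)"
      using \<open>0 \<le> C\<close> by (simp add: epow_ennreal powr_mult powr_powr \<rho>_def powr_realpow[symmetric]
          mult_ac)
    finally show ?thesis
      using \<open>0 \<le> C\<close> \<rho> by (simp add: ennreal_mult)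
  qed
  then have "(\<integral>\<^sup>+\<nu>. epow (g \<nu>) t \<partial>count_space UNIV)
      \<le> ennreal (C powr t) * (\<integral>\<^sup>+\<nu>. ennreal (\<rho> ^ nat \<bar>\<nu>\<bar>) \<partial>count_space UNIV)"
    by (auto simp: nn_integral_cmult[symmetric] intro!: nn_integral_mono)
  also have "\<dots> < top"
    using nn_integral_count_space_int_geometric_finite[OF \<rho>] by (simp add: ennreal_mult_less_top)
  finally show ?thesis
    using \<tau> by (simp add: nn_Lnorm_def nn_Lp_norm_def t_def[symmetric] epow_eq_top_iff flip: less_top)
qed

lemma BBM_nn_norm_indicator_finite:
  fixes E :: "(real ^ 'n) set" and p q r \<tau> :: ennreal
  assumes exponents: "(1 \<le> q \<and> q < p \<and> p < r \<and> 1 \<le> \<tau> \<and> \<tau> < top)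
      \<or> (1 \<le> q \<and> q \<le> p \<and> p \<le> r \<and> \<tau> = top)"
    and E: "E \<in> lmeasurable"
  shows "BBM_nn_norm p \<tau> q r (indicator E) < top"
proof (cases "measure lebesgue E = 0")
  case True
  then have "AE x in lebesgue. indicator E x = (0 :: ennreal)"
    using AE_not_in[of E lebesgue] E
    by (auto simp: null_sets_def emeasure_eq_measure2 elim!: eventually_mono)
  with exponents show ?thesis
    by (auto simp: BBM_nn_norm_AE_zero)
next
  case False
  have q: "1 \<le> q" "q \<le> p" "p \<le> r" and p: "1 \<le> p" and \<tau>: "1 \<le> \<tau>"
    using exponents by auto
  let ?C = "measure lebesgue E powr enn2real (1 / r) + measure lebesgue E powr enn2real (1 / q)"
  note decay = level_norm_indicator_decay[OF E _ q(1) order_trans[OF q(2,3)]]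
  consider "\<tau> = top" | "q < p" "p < r" "\<tau> \<noteq> top"
    using exponents by auto
  then show ?thesis
  proof cases
    case 1
    have "level_norm p q r (indicator E) \<nu> \<le> ennreal ?C" for \<nu>
      using False decay[of 0 p \<nu>] enn2real_inverse_antimono[OF q(1,2)] enn2real_inverse_antimono[OF p q(3)]
      by (simp add: zero_less_measure_iff)
    then have "BBM_nn_norm p \<tau> q r (indicator E) \<le> ennreal ?C"
      using 1 by (simp add: BBM_nn_norm_def nn_Lnorm_def ess_sup_count_space SUP_least)
    then show ?thesis
      using le_less_trans by fastforce
  next
    case 2
    define \<gamma> where "\<gamma> = min (enn2real (1 / p) - enn2real (1 / r)) (enn2real (1 / q) - enn2real (1 / p))"
    have "0 < \<gamma>"
      using enn2real_inverse_strict_antimono[OF q(1) 2(1)] enn2real_inverse_strict_antimono[OF p 2(2)]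
      by (simp add: \<gamma>_def)
    then show ?thesis
      unfolding BBM_nn_norm_def using 2 \<tau> False decay[of \<gamma> p]
      by (intro nn_Lnorm_count_space_int_decay_finite[of _ "real CARD('n) * \<gamma>" ?C])
        (auto simp: \<gamma>_def mult.assoc zero_less_measure_iff)
  qed
qed

lemma indicator_ball_in_BBM_space:
  fixes p q r \<tau> :: ennreal and c :: "real ^ 'n"
  assumes "(1 \<le> q \<and> q < p \<and> p < r \<and> 1 \<le> \<tau> \<and> \<tau> < top)
      \<or> (1 \<le> q \<and> q \<le> p \<and> p \<le> r \<and> \<tau> = top)"
  shows "indicator (ball c \<rho>) \<in> BBM_space p \<tau> q r"
proof -
  have q: "1 \<le> q" and r: "1 \<le> r" and \<tau>: "1 \<le> \<tau>"
    using assms by (auto intro: order_trans less_imp_le)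
  have "BBM_norm p \<tau> q r (indicator (ball c \<rho>)) = BBM_nn_norm p \<tau> q r (indicator (ball c \<rho>))"
    unfolding BBM_norm_eq_BBM_nn_norm[OF q]
    by (intro arg_cong[where f = "BBM_nn_norm p \<tau> q r"]) (auto split: split_indicator)
  with BBM_nn_norm_indicator_finite[OF assms lmeasurable_ball[of c \<rho>]] show ?thesis
    using BBM_space_iff[OF q r \<tau> borel_measurable_indicator[OF fmeasurableD[OF lmeasurable_ball[of c \<rho>]]]]
    by simp
qed

theorem lemma4p10:
  fixes p q r \<tau> :: ennreal
  assumes "(1 \<le> q \<and> q < p \<and> p < r \<and> 1 \<le> \<tau> \<and> \<tau> < top)
         \<or> (1 \<le> q \<and> q \<le> p \<and> p \<le> r \<and> \<tau> = top)"
  shows "ball_Banach_function_space (BBM_space p \<tau> q r :: (real ^ 'n \<Rightarrow> real) set)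
                                    (BBM_norm p \<tau> q r)"
proof -
  have q: "1 \<le> q" and r: "1 \<le> r" and \<tau>: "1 \<le> \<tau>"
    using assms by (auto intro: order_trans less_imp_le)
  have measurable: "BBM_space p \<tau> q r \<subseteq> (borel_measurable lebesgue :: (real ^ 'n \<Rightarrow> real) set)"
    by (rule BBM_space_subset_measurable[OF q r \<tau>])
  show ?thesis
    unfolding ball_Banach_function_space_def
    apply (intro conjI)
    subgoal by (rule measurable)
    subgoal using BBM_space_iff[OF q r \<tau>] by blast
    subgoal using measurable BBM_norm_cmult[OF q r \<tau>] by blast
    subgoal using BBM_norm_eq_0_imp_AE[OF q r \<tau>] by blast
    subgoal using BBM_norm_mono[OF q r \<tau>] by blast
    subgoal using BBM_norm_monotone_convergence[OF q r \<tau>] by blast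
    subgoal using indicator_ball_in_BBM_space[OF assms] by blast
    subgoal using measurable BBM_norm_triangle[OF q r \<tau>] by blast
    subgoal using BBM_norm_integral_ball_le[OF q r \<tau>] by blast
    subgoal by (intro allI impI BBM_space_complete[OF q r \<tau>]) auto
    done
qed

end
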